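(* Let $K,N_r\in\mathbb{N}$ with $N_r\geq 2K+1$, let $R>0$, and let $\mathbf{Y}\in\mathbb{C}^{2N_r\times(4K+2)}$, $\mathbf{Z}_{\mathbf{Y}}$ be as in the context. Then, as $R\to+\infty$, the matrix $\mathbf{Y}^*\mathbf{Y}$ admits the decomposition $$\mathbf{Y}^*\mathbf{Y}=N_r\mathbf{Z}_{\mathbf{Y}}+\mathbf{Q},$$ where $\mathbf{Q}=(q_{\ell\ell'})_{\ell,\ell'=1,\dots,4K+2}$ satisfies $|q_{\ell\ell'}|\leq CR^{-2}$ for some constant $C>0$ independent of $R$.
   Context: Let $\lambda_0,\mu_0,\rho_0>0$, $\omega>0$, $c_S=\sqrt{\mu_0/\rho_0}$, $c_P=\sqrt{(\lambda_0+2\mu_0)/\rho_0}$, $\kappa_\alpha=\omega/c_\alpha$ ($\alpha\in\{P,S\}$). With $\mathbf{x}=|\mathbf{x}|(\cos\varphi_{\mathbf{x}},\sin\varphi_{\mathbf{x}})$ and $\vec\nabla_\perp\times f=(\partial_2 f,-\partial_1 f)^\top$, let $\mathbf{H}^P_n(\mathbf{x})=\nabla[H^{(1)}_n(\kappa_P|\mathbf{x}|)e^{in\varphi_{\mathbf{x}}}]$ and $\mathbf{H}^S_n(\mathbf{x})=\vec\nabla_\perp\times[H^{(1)}_n(\kappa_S|\mathbf{x}|)e^{in\varphi_{\mathbf{x}}}]$, $n\in\mathbb{Z}$, where $H^{(1)}_n$ is the Hankel function of the first kind. Receivers: $\mathbf{x}_r=R(\cos\theta_r,\sin\theta_r)$,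 $\theta_r=2\pi r/N_r$, $r=1,\dots,N_r$, with reception directions $\mathbf{d}_r=(\cos\theta_r,\sin\theta_r)$ and $\mathbf{d}_r^\perp=(-\sin\theta_r,\cos\theta_r)$. Define $\mathbf{Y}^\alpha_\parallel,\mathbf{Y}^\alpha_\perp\in\mathbb{C}^{N_r\times(2K+1)}$ (columns indexed by $n=-K,\dots,K$) by $(\mathbf{Y}^\alpha_\parallel)_{rn}=\overline{\mathbf{H}^\alpha_n(\mathbf{x}_r)}\cdot\mathbf{d}_r$, $(\mathbf{Y}^\alpha_\perp)_{rn}=\overline{\mathbf{H}^\alpha_n(\mathbf{x}_r)}\cdot\mathbf{d}^\perp_r$, and $\mathbf{Y}=\begin{pmatrix}\mathbf{Y}^P_\parallel & \mathbf{Y}^S_\parallel\\ \mathbf{Y}^P_\perp & \mathbf{Y}^S_\perp\end{pmatrix}$; $\mathbf{Y}^*$ is the conjugate transpose. Let $g^P_m=\kappa_P(H^{(1)}_m)'(\kappa_PR)$ and $h^S_m=-\kappa_S(H^{(1)}_m)'(\kappa_SR)$, and $\mathbf{Z}_{\mathbf{Y}}=\begin{pmatrix}\mathbf{C}^{P,P} & \mathbf{0}\\ \mathbf{0} & \mathbf{D}^{S,S}\end{pmatrix}$ with $\mathbf{C}^{P,P}={\rm diag}(|g^P_{-K}|^2,\dots,|g^P_K|^2)$, $\mathbf{D}^{S,S}={\rm diag}(|h^S_{-K}|^2,\dots,|h^S_K|^2)$. *)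

theory Defs
  imports "HOL-Analysis.Analysis"
begin

text \<open>Bessel functions of integer order for real argument x > 0, via Bessel's
integral and Schlaefli's integral (DLMF 10.9.2, 10.9.7 with cos(n pi) = (-1)^n).\<close>

definition besselJ :: "int \<Rightarrow> real \<Rightarrow> real" where
  "besselJ n x = (1 / pi) * integral {0..pi} (\<lambda>\<theta>. cos (of_int n * \<theta> - x * sin \<theta>))"

definition besselY :: "int \<Rightarrow> real \<Rightarrow> real" where
  "besselY n x =
     (1 / pi) * integral {0..pi} (\<lambda>\<theta>. sin (x * sin \<theta> - of_int n * \<theta>))
   - (1 / pi) * integral {0..}
       (\<lambda>t. (exp (of_int n * t) + ((-1::real) powi n) * exp (- of_int n * t)) * exp (- x * sinh t))"

definition hankel1 :: "int \<Rightarrow> real \<Rightarrow> complex" where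
  "hankel1 n x = Complex (besselJ n x) (besselY n x)"

text \<open>Points of the plane are represented as complex numbers z = x1 + i x2.\<close>
definition pd1 :: "(complex \<Rightarrow> complex) \<Rightarrow> complex \<Rightarrow> complex" where
  "pd1 f z = vector_derivative (\<lambda>t::real. f (z + of_real t)) (at 0)"

definition pd2 :: "(complex \<Rightarrow> complex) \<Rightarrow> complex \<Rightarrow> complex" where
  "pd2 f z = vector_derivative (\<lambda>t::real. f (z + \<i> * of_real t)) (at 0)"

text \<open>The function x \<mapsto> H_n(\<kappa>|x|) e^{i n \<phi>_x}; e^{i\<phi>_x} = z/|z|.\<close>
definition radial_mode :: "real \<Rightarrow> int \<Rightarrow> complex \<Rightarrow> complex" where
  "radial_mode \<kappa> n z = hankel1 n (\<kappa> * cmod z) * (z / of_real (cmod z)) powi n"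

definition HP :: "real \<Rightarrow> int \<Rightarrow> complex \<Rightarrow> complex \<times> complex" where
  "HP \<kappa> n z = (pd1 (radial_mode \<kappa> n) z, pd2 (radial_mode \<kappa> n) z)"

definition HS :: "real \<Rightarrow> int \<Rightarrow> complex \<Rightarrow> complex \<times> complex" where
  "HS \<kappa> n z = (pd2 (radial_mode \<kappa> n) z, - pd1 (radial_mode \<kappa> n) z)"

definition cdot :: "complex \<times> complex \<Rightarrow> real \<times> real \<Rightarrow> complex" where
  "cdot v d = cnj (fst v) * of_real (fst d) + cnj (snd v) * of_real (snd d)"

definition theta_r :: "nat \<Rightarrow> nat \<Rightarrow> real" where
  "theta_r Nr r = 2 * pi * real r / real Nr"

definition x_r :: "real \<Rightarrow> nat \<Rightarrow> nat \<Rightarrow> complex" where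
  "x_r R Nr r = of_real R * cis (theta_r Nr r)"

text \<open>Column l (0-based, l < 4K+2): l < 2K+1 is P with n = l - K,
  otherwise S with n = l - (2K+1) - K.\<close>
definition Hfield :: "real \<Rightarrow> real \<Rightarrow> nat \<Rightarrow> nat \<Rightarrow> complex \<Rightarrow> complex \<times> complex" where
  "Hfield \<kappa>P \<kappa>S K l z =
     (if l < 2*K+1 then HP \<kappa>P (int l - int K) z
      else HS \<kappa>S (int l - int (2*K+1) - int K) z)"

text \<open>Row i (0-based, i < 2Nr): i < Nr is the parallel component at receiver r = i+1,
  otherwise the perpendicular component at receiver r = i - Nr + 1.\<close>
definition Ymat :: "real \<Rightarrow> real \<Rightarrow> nat \<Rightarrow> nat \<Rightarrow> real \<Rightarrow> nat \<Rightarrow> nat \<Rightarrow> complex" where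
  "Ymat \<kappa>P \<kappa>S K Nr R i l =
     (if i < Nr then
        (let r = i + 1; \<theta> = theta_r Nr r in
          cdot (Hfield \<kappa>P \<kappa>S K l (x_r R Nr r)) (cos \<theta>, sin \<theta>))
      else
        (let r = i - Nr + 1; \<theta> = theta_r Nr r in
          cdot (Hfield \<kappa>P \<kappa>S K l (x_r R Nr r)) (- sin \<theta>, cos \<theta>)))"

definition YstarY :: "real \<Rightarrow> real \<Rightarrow> nat \<Rightarrow> nat \<Rightarrow> real \<Rightarrow> nat \<Rightarrow> nat \<Rightarrow> complex" where
  "YstarY \<kappa>P \<kappa>S K Nr R l l' =
     (\<Sum>i<2*Nr. cnj (Ymat \<kappa>P \<kappa>S K Nr R i l) * Ymat \<kappa>P \<kappa>S K Nr R i l')"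

definition gP :: "real \<Rightarrow> real \<Rightarrow> int \<Rightarrow> complex" where
  "gP \<kappa> R m = of_real \<kappa> * vector_derivative (hankel1 m) (at (\<kappa> * R))"

definition hS :: "real \<Rightarrow> real \<Rightarrow> int \<Rightarrow> complex" where
  "hS \<kappa> R m = - of_real \<kappa> * vector_derivative (hankel1 m) (at (\<kappa> * R))"

definition ZY :: "real \<Rightarrow> real \<Rightarrow> nat \<Rightarrow> real \<Rightarrow> nat \<Rightarrow> nat \<Rightarrow> complex" where
  "ZY \<kappa>P \<kappa>S K R l l' =
     (if l \<noteq> l' then 0
      else if l < 2*K+1 then of_real ((cmod (gP \<kappa>P R (int l - int K)))\<^sup>2)
      else of_real ((cmod (hS \<kappa>S R (int l - int (2*K+1) - int K)))\<^sup>2))"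

end

theory Submission
  imports Defs
begin

text \<open>
  For \<open>x > |n|\<close>, Bessel's and Schlaefli's integrals give \<open>\<pi> H\<^sub>n(x) = I\<^sub>n(x) - i T\<^sub>n(x)\<close> with the
  oscillatory integral \<open>I\<^sub>n(x) = \<integral>\<^sub>0\<^sup>\<pi> cis (x sin \<theta> - n \<theta>) d\<theta>\<close> (\<open>bessel_osc\<close>) and the Schlaefli tail
  \<open>T\<^sub>n(x)\<close> (\<open>schlaefli_tail\<close>).
  The tail and its \<open>x\<close>-derivative are \<open>O(1/x)\<close> by exponential domination. \<open>I\<^sub>n\<close> and its
  \<open>x\<close>-derivative are \<open>O(1/\<surd>x)\<close>: integrate by parts away from the stationary point \<open>\<theta> = \<pi>/2\<close> and
  bound the window of width \<open>2/\<surd>x\<close> around it trivially. Hence \<open>H\<^sub>n\<close> and \<open>H\<^sub>n'\<close> are \<open>O(1/\<surd>x)\<close>.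

  At the receiver \<open>R cis \<theta>\<close> the radial and angular derivatives of \<open>H\<^sub>n(\<kappa>|x|) cis (n \<phi>)\<close> are
  \<open>\<kappa> H\<^sub>n'(\<kappa>R) cis (n\<theta>)\<close> and \<open>(i n / R) H\<^sub>n(\<kappa>R) cis (n\<theta>)\<close>, so each column of \<open>Y\<close> is a discrete
  Fourier mode weighted by one radial and one angular coefficient. Summing over the receivers, the
  orthogonality of the \<open>N\<^sub>r\<close>-th roots of unity (\<open>|m - m'| \<le> 2K < N\<^sub>r\<close>) kills every entry of
  \<open>Y\<^sup>*Y\<close> with different mode numbers and leaves \<open>N\<^sub>r\<close> times a sum of coefficient products otherwise.
  The product of two radial coefficients is exactly \<open>N\<^sub>r Z\<^sub>Y\<close>; every other product contains an
  angular coefficient, which is \<open>O(R^(-3/2))\<close>, against a coefficient \<open>O(R^(-1/2))\<close>.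
\<close>

section \<open>Decay of the Schlaefli tail\<close>

lemma exp_dominated_integral:
  fixes f :: "real \<Rightarrow> real"
  assumes cont: "continuous_on {0..} f" and a: "a > 0"
    and bound: "\<And>t. t \<ge> 0 \<Longrightarrow> \<bar>f t\<bar> \<le> C * exp (- a * t)"
  shows "f integrable_on {0..}" "\<bar>integral {0..} f\<bar> \<le> C / a"
proof -
  have dom: "((\<lambda>t. C * exp (- a * t)) has_integral C / a) {0..}"
    using has_integral_mult_right[OF has_integral_exp_minus_to_infinity[OF a, of 0], of C] by simp
  hence dom_int: "(\<lambda>t. C * exp (- a * t)) integrable_on {0..}" by blast
  show f_int: "f integrable_on {0..}"
  proof (rule integrable_on_all_intervals_integrable_bound[where g = "\<lambda>t. C * exp (- a * t)"])
    fix u v :: real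
    have "{0..} \<inter> cbox u v = {max 0 u..v}" by auto
    then show "(\<lambda>x. if x \<in> {0..} then f x else 0) integrable_on cbox u v"
      unfolding integrable_restrict_Int
      by (metis atLeast_iff continuous_on_subset[OF cont] integrable_continuous_real
          max.cobounded1 order_trans subsetI atLeastAtMost_iff)
  qed (use bound dom_int in simp_all)
  have "norm (integral {0..} f) \<le> integral {0..} (\<lambda>t. C * exp (- a * t))"
    by (rule integral_norm_bound_integral[OF f_int dom_int]) (use bound in auto)
  thus "\<bar>integral {0..} f\<bar> \<le> C / a" using integral_unique[OF dom] by simp
qed

lemma sinh_ge_self: "0 \<le> t \<Longrightarrow> t \<le> sinh (t::real)"
  using real_le_x_sinh[of t] by (simp add: sinh_field_def exp_minus)

lemma mult_exp_minus_le: "0 \<le> (s::real) \<Longrightarrow> s * exp (- s) \<le> 1"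
proof -
  have "s \<le> exp s" using exp_ge_add_one_self[of s] by linarith
  thus ?thesis by (simp add: exp_minus field_simps)
qed

lemma power2_mult_exp_minus_le: "0 \<le> (s::real) \<Longrightarrow> s\<^sup>2 * exp (- s) \<le> 4"
proof -
  assume s: "0 \<le> s"
  have "(1 + s/2)\<^sup>2 \<le> exp (s/2) ^ 2"
    using s exp_ge_add_one_self[of "s/2"] by (intro power_mono) auto
  also have "exp (s/2) ^ 2 = exp s" by (simp add: power2_eq_square flip: exp_add)
  finally have "(1 + s/2)\<^sup>2 \<le> exp s" .
  moreover have "(s/2)\<^sup>2 \<le> (1 + s/2)\<^sup>2" using s by (intro power_mono) auto
  ultimately have "s\<^sup>2 \<le> 4 * exp s" by (simp add: power2_eq_square)
  thus ?thesis by (simp add: exp_minus field_simps)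
qed

lemma abs_exp_minus_one_minus_le: "\<bar>exp u - 1 - u\<bar> \<le> exp \<bar>u\<bar> * u\<^sup>2 / (2::real)"
proof -
  obtain t where t: "\<bar>t\<bar> \<le> \<bar>u\<bar>" "exp u = (\<Sum>m<2. u ^ m / fact m) + exp t / fact 2 * u ^ 2"
    using Maclaurin_exp_le[of u 2] by blast
  have remainder: "exp u - 1 - u = exp t * u\<^sup>2 / 2" using t(2) by (simp add: numeral_2_eq_2)
  have "exp t * u\<^sup>2 \<le> exp \<bar>u\<bar> * u\<^sup>2" using t(1) by (intro mult_right_mono) auto
  thus ?thesis unfolding remainder by simp
qed

lemma abs_exp_linearization_le:
  fixes h s x :: real
  assumes s: "0 \<le> s" and h: "\<bar>h\<bar> \<le> 1"
  shows "\<bar>exp (- (x + h) * s) - exp (- x * s) + h * s * exp (- x * s)\<bar> \<le> 2 * h\<^sup>2 * exp (- (x - 2) * s)"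
proof -
  have "exp (- (x + h) * s) - exp (- x * s) + h * s * exp (- x * s)
      = exp (- x * s) * (exp (- h * s) - 1 - (- h * s))"
    by (simp add: algebra_simps flip: exp_add)
  hence "\<bar>exp (- (x + h) * s) - exp (- x * s) + h * s * exp (- x * s)\<bar>
      = exp (- x * s) * \<bar>exp (- h * s) - 1 - (- h * s)\<bar>"
    by (simp add: abs_mult)
  also have "\<dots> \<le> exp (- x * s) * (exp \<bar>- h * s\<bar> * (- h * s)\<^sup>2 / 2)"
    by (intro mult_left_mono abs_exp_minus_one_minus_le) simp
  also have "\<dots> \<le> exp (- x * s) * (exp s * (h\<^sup>2 * s\<^sup>2) / 2)"
    using s h by (intro mult_left_mono divide_right_mono mult_mono)
      (auto simp: power_mult_distrib abs_mult mult_left_le_one_le)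
  also have "\<dots> \<le> exp (- x * s) * (exp s * (h\<^sup>2 * (4 * exp s)) / 2)"
    using power2_mult_exp_minus_le[OF s]
    by (intro mult_left_mono divide_right_mono) (auto simp: exp_minus field_simps)
  also have "\<dots> = 2 * h\<^sup>2 * exp (- (x - 2) * s)"
    by (simp add: algebra_simps flip: exp_add)
  finally show ?thesis .
qed

definition schlaefli_weight :: "int \<Rightarrow> real \<Rightarrow> real" where
  "schlaefli_weight n t = exp (of_int n * t) + ((-1::real) powi n) * exp (- of_int n * t)"

lemma continuous_on_schlaefli_weight [continuous_intros]: "continuous_on S (schlaefli_weight n)"
  unfolding schlaefli_weight_def by (intro continuous_intros)

lemma abs_schlaefli_weight_le:
  assumes "0 \<le> t" shows "\<bar>schlaefli_weight n t\<bar> \<le> 2 * exp (\<bar>of_int n\<bar> * t)"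
proof -
  have "of_int n * t \<le> \<bar>of_int n\<bar> * t" "- of_int n * t \<le> \<bar>of_int n\<bar> * t"
    using assms by (intro mult_right_mono; simp)+
  hence "exp (of_int n * t) \<le> exp (\<bar>of_int n\<bar> * t)" "exp (- of_int n * t) \<le> exp (\<bar>of_int n\<bar> * t)"
    by simp_all
  moreover have "\<bar>schlaefli_weight n t\<bar> \<le> exp (of_int n * t) + exp (- of_int n * t)"
    unfolding schlaefli_weight_def
    using abs_triangle_ineq[of "exp (of_int n * t)" "(-1::real) powi n * exp (- of_int n * t)"]
    by (simp add: abs_mult power_int_abs)
  ultimately show ?thesis by linarith
qed

definition schlaefli_tail :: "int \<Rightarrow> real \<Rightarrow> real" where
  "schlaefli_tail n x = integral {0..} (\<lambda>t. schlaefli_weight n t * exp (- x * sinh t))"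

text \<open>The \<open>x\<close>-derivative of \<open>schlaefli_tail\<close> taken under the integral sign; this is justified by
  \<open>schlaefli_tail_has_real_derivative\<close> below.\<close>
definition schlaefli_tail' :: "int \<Rightarrow> real \<Rightarrow> real" where
  "schlaefli_tail' n x = integral {0..} (\<lambda>t. - (sinh t * schlaefli_weight n t * exp (- x * sinh t)))"

lemma abs_schlaefli_integrand_le:
  assumes "0 \<le> t" "0 \<le> x"
  shows "\<bar>schlaefli_weight n t * exp (- x * sinh t)\<bar> \<le> 2 * exp (- (x - \<bar>of_int n\<bar>) * t)"
proof -
  have "exp (- x * sinh t) \<le> exp (- x * t)"
    using assms sinh_ge_self[of t] by (simp add: mult_left_mono)
  hence "\<bar>schlaefli_weight n t * exp (- x * sinh t)\<bar> \<le> 2 * exp (\<bar>of_int n\<bar> * t) * exp (- x * t)"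
    unfolding abs_mult using abs_schlaefli_weight_le[OF assms(1), of n] by (intro mult_mono) auto
  also have "\<dots> = 2 * exp (- (x - \<bar>of_int n\<bar>) * t)" by (simp add: algebra_simps flip: exp_add)
  finally show ?thesis .
qed

lemma abs_schlaefli_integrand'_le:
  assumes "0 \<le> t" "1 \<le> x"
  shows "\<bar>- (sinh t * schlaefli_weight n t * exp (- x * sinh t))\<bar> \<le> 2 * exp (- (x - 1 - \<bar>of_int n\<bar>) * t)"
proof -
  have "\<bar>- (sinh t * schlaefli_weight n t * exp (- x * sinh t))\<bar>
      = \<bar>schlaefli_weight n t * exp (- (x - 1) * sinh t)\<bar> * (sinh t * exp (- sinh t))"
    using assms by (simp add: abs_mult algebra_simps flip: exp_add)
  also have "\<dots> \<le> 2 * exp (- ((x - 1) - \<bar>of_int n\<bar>) * t) * 1"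
    using assms mult_exp_minus_le[of "sinh t"] by (intro mult_mono abs_schlaefli_integrand_le) auto
  finally show ?thesis by (simp add: algebra_simps)
qed

lemma schlaefli_tail_estimate:
  assumes "\<bar>of_int n\<bar> < x"
  shows "(\<lambda>t. schlaefli_weight n t * exp (- x * sinh t)) integrable_on {0..}"
    and "\<bar>schlaefli_tail n x\<bar> \<le> 2 / (x - \<bar>of_int n\<bar>)"
proof -
  have "continuous_on {0..} (\<lambda>t. schlaefli_weight n t * exp (- x * sinh t))"
    by (intro continuous_intros)
  from exp_dominated_integral[OF this, of "x - \<bar>of_int n\<bar>" 2] abs_schlaefli_integrand_le[of _ x n] assms
  show "(\<lambda>t. schlaefli_weight n t * exp (- x * sinh t)) integrable_on {0..}"
    and "\<bar>schlaefli_tail n x\<bar> \<le> 2 / (x - \<bar>of_int n\<bar>)"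
    unfolding schlaefli_tail_def by auto
qed

lemma schlaefli_tail'_estimate:
  assumes "1 + \<bar>of_int n\<bar> < x"
  shows "(\<lambda>t. - (sinh t * schlaefli_weight n t * exp (- x * sinh t))) integrable_on {0..}"
    and "\<bar>schlaefli_tail' n x\<bar> \<le> 2 / (x - 1 - \<bar>of_int n\<bar>)"
proof -
  have "continuous_on {0..} (\<lambda>t. - (sinh t * schlaefli_weight n t * exp (- x * sinh t)))"
    by (intro continuous_intros)
  from exp_dominated_integral[OF this, of "x - 1 - \<bar>of_int n\<bar>" 2] abs_schlaefli_integrand'_le[of _ x n] assms
  show "(\<lambda>t. - (sinh t * schlaefli_weight n t * exp (- x * sinh t))) integrable_on {0..}"
    and "\<bar>schlaefli_tail' n x\<bar> \<le> 2 / (x - 1 - \<bar>of_int n\<bar>)"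
    unfolding schlaefli_tail'_def by auto
qed

lemma abs_schlaefli_remainder_integrand_le:
  assumes x: "2 \<le> x" and h: "\<bar>h\<bar> \<le> 1" and t: "0 \<le> t"
  shows "\<bar>schlaefli_weight n t * (exp (- (x + h) * sinh t) - exp (- x * sinh t) + h * sinh t * exp (- x * sinh t))\<bar>
      \<le> 4 * h\<^sup>2 * exp (- (x - 2 - \<bar>of_int n\<bar>) * t)"
proof -
  have "(x - 2) * t \<le> (x - 2) * sinh t" by (rule mult_left_mono) (use x sinh_ge_self[OF t] in auto)
  hence "exp (- (x - 2) * sinh t) \<le> exp (- (x - 2) * t)" by (simp add: algebra_simps)
  hence "2 * h\<^sup>2 * exp (- (x - 2) * sinh t) \<le> 2 * h\<^sup>2 * exp (- (x - 2) * t)"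
    by (intro mult_left_mono) auto
  hence "\<bar>schlaefli_weight n t * (exp (- (x + h) * sinh t) - exp (- x * sinh t) + h * sinh t * exp (- x * sinh t))\<bar>
      \<le> (2 * exp (\<bar>of_int n\<bar> * t)) * (2 * h\<^sup>2 * exp (- (x - 2) * t))"
    unfolding abs_mult
    using abs_schlaefli_weight_le[OF t, of n] abs_exp_linearization_le[of "sinh t" h x] t h
    by (intro mult_mono) (auto intro: order_trans)
  also have "\<dots> = 4 * h\<^sup>2 * exp (- (x - 2 - \<bar>of_int n\<bar>) * t)"
    by (simp add: algebra_simps flip: exp_add)
  finally show ?thesis .
qed

lemma schlaefli_tail_linearization_le:
  assumes x: "3 + \<bar>of_int n\<bar> < x" and h: "\<bar>h\<bar> \<le> 1"
  shows "\<bar>schlaefli_tail n (x + h) - schlaefli_tail n x - h * schlaefli_tail' n x\<bar>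
      \<le> 4 * h\<^sup>2 / (x - 2 - \<bar>of_int n\<bar>)"
proof -
  let ?R = "\<lambda>t. schlaefli_weight n t * (exp (- (x + h) * sinh t) - exp (- x * sinh t)
                + h * sinh t * exp (- x * sinh t))"
  have "((\<lambda>t. schlaefli_weight n t * exp (- (x + h) * sinh t) - schlaefli_weight n t * exp (- x * sinh t)
      - h * - (sinh t * schlaefli_weight n t * exp (- x * sinh t)))
      has_integral schlaefli_tail n (x + h) - schlaefli_tail n x - h * schlaefli_tail' n x) {0..}"
    unfolding schlaefli_tail_def schlaefli_tail'_def
    using x h schlaefli_tail_estimate(1)[of n "x + h"] schlaefli_tail_estimate(1)[of n x]
      schlaefli_tail'_estimate(1)[of n x]
    by (intro has_integral_diff has_integral_mult_right integrable_integral) auto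
  hence "schlaefli_tail n (x + h) - schlaefli_tail n x - h * schlaefli_tail' n x = integral {0..} ?R"
    by (simp add: integral_unique algebra_simps)
  also have "\<bar>integral {0..} ?R\<bar> \<le> 4 * h\<^sup>2 / (x - 2 - \<bar>of_int n\<bar>)"
    using x h abs_schlaefli_remainder_integrand_le[of x h]
    by (intro exp_dominated_integral(2)) (auto intro!: continuous_intros)
  finally show ?thesis .
qed

lemma schlaefli_tail_has_real_derivative:
  assumes x: "3 + \<bar>of_int n\<bar> < x"
  shows "(schlaefli_tail n has_real_derivative schlaefli_tail' n x) (at x)"
proof -
  define c where "c = 4 / (x - 2 - \<bar>of_int n\<bar>)"
  have "\<forall>\<^sub>F h in at (0::real). \<bar>h\<bar> < 1 \<and> h \<noteq> 0"
    unfolding eventually_at by (rule exI[of _ 1]) auto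
  hence lin: "\<forall>\<^sub>F h in at 0. norm ((schlaefli_tail n (x + h) - schlaefli_tail n x) / h - schlaefli_tail' n x)
      \<le> c * \<bar>h\<bar>"
  proof eventually_elim
    case (elim h)
    have "norm ((schlaefli_tail n (x + h) - schlaefli_tail n x) / h - schlaefli_tail' n x)
        = \<bar>schlaefli_tail n (x + h) - schlaefli_tail n x - h * schlaefli_tail' n x\<bar> / \<bar>h\<bar>"
      using elim by (simp add: field_simps)
    also have "\<dots> \<le> (4 * h\<^sup>2 / (x - 2 - \<bar>of_int n\<bar>)) / \<bar>h\<bar>"
      using schlaefli_tail_linearization_le[OF x, of h] elim by (intro divide_right_mono) auto
    also have "\<dots> = c * \<bar>h\<bar>"
    proof -
      have "(4 * a\<^sup>2 / d) / a = 4 / d * a" if "a \<noteq> 0" for a d :: real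
        using that by (simp add: power2_eq_square)
      from this[of "\<bar>h\<bar>"] show ?thesis using elim by (simp add: c_def)
    qed
    finally show ?case .
  qed
  have "((\<lambda>h. c * \<bar>h\<bar>) \<longlongrightarrow> c * \<bar>0\<bar>) (at (0::real))"
    by (intro tendsto_intros)
  hence "((\<lambda>h. c * \<bar>h\<bar>) \<longlongrightarrow> 0) (at (0::real))" by simp
  from Lim_null_comparison[OF lin this] show ?thesis
    unfolding DERIV_def by (simp add: LIM_zero_iff)
qed


section \<open>Oscillatory integrals with phase \<open>x sin \<theta>\<close>\<close>

lemma has_vector_derivative_cis:
  assumes "(f has_real_derivative f') (at x within A)"
  shows "((\<lambda>x. cis (f x)) has_vector_derivative \<i> * of_real f' * cis (f x)) (at x within A)"
  using has_derivative_cis[OF assms[unfolded has_field_derivative_def]]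
  unfolding has_vector_derivative_def
  by (rule has_derivative_eq_rhs) (simp add: fun_eq_iff scaleR_conv_of_real mult_ac)

lemma has_integral_sin_div_cos_squared:
  assumes c: "0 \<le> c" "c < pi/2"
  shows "((\<lambda>\<theta>. sin \<theta> / (cos \<theta>)\<^sup>2) has_integral 1 / cos c - 1) {0..c}"
proof -
  have "((\<lambda>\<theta>. sin \<theta> / (cos \<theta>)\<^sup>2) has_integral 1 / cos c - 1 / cos 0) {0..c}"
  proof (rule fundamental_theorem_of_calculus[OF c(1)])
    fix \<theta> assume "\<theta> \<in> {0..c}"
    hence "cos \<theta> \<noteq> 0" using cos_gt_zero_pi[of \<theta>] c by auto
    thus "((\<lambda>\<theta>. 1 / cos \<theta>) has_vector_derivative sin \<theta> / (cos \<theta>)\<^sup>2) (at \<theta> within {0..c})"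
      unfolding has_real_derivative_iff_has_vector_derivative[symmetric]
      by (auto intro!: derivative_eq_intros simp: power2_eq_square)
  qed
  thus ?thesis by simp
qed

lemma has_vector_derivative_sec_cis_sin:
  fixes a :: "real \<Rightarrow> complex"
  assumes cz: "cos \<theta> \<noteq> 0" and da: "(a has_vector_derivative a' \<theta>) (at \<theta> within S)"
  shows "((\<lambda>\<theta>. a \<theta> * (of_real (1 / cos \<theta>) * cis (x * sin \<theta>))) has_vector_derivative
      (a' \<theta> * of_real (1 / cos \<theta>) + a \<theta> * of_real (sin \<theta> / (cos \<theta>)\<^sup>2)) * cis (x * sin \<theta>)
      + \<i> * of_real x * (a \<theta> * cis (x * sin \<theta>))) (at \<theta> within S)"
proof -
  have dsec: "((\<lambda>\<theta>. complex_of_real (1 / cos \<theta>)) has_vector_derivative of_real (sin \<theta> / (cos \<theta>)\<^sup>2))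
      (at \<theta> within S)"
    by (rule has_vector_derivative_of_real) (use cz in \<open>auto intro!: derivative_eq_intros simp: power2_eq_square\<close>)
  have dcis: "((\<lambda>\<theta>. cis (x * sin \<theta>)) has_vector_derivative \<i> * of_real (x * cos \<theta>) * cis (x * sin \<theta>))
      (at \<theta> within S)"
    by (rule has_vector_derivative_cis) (auto intro!: derivative_eq_intros)
  have "complex_of_real (1 / cos \<theta>) * of_real (x * cos \<theta>) = of_real x"
    by (simp only: of_real_mult[symmetric]) (use cz in simp)
  with has_vector_derivative_mult[OF da has_vector_derivative_mult[OF dsec dcis]]
  show ?thesis using cz by (simp add: algebra_simps)
qed

text \<open>Integration by parts against \<open>d/d\<theta> cis (x sin \<theta>) = i x cos \<theta> cis (x sin \<theta>)\<close>, dividing the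
  amplitude by \<open>cos \<theta>\<close>; this is why the interval has to stay away from \<open>\<pi>/2\<close>.\<close>
lemma cis_sin_integration_by_parts:
  fixes a a' :: "real \<Rightarrow> complex" and x :: real
  assumes c: "0 \<le> c" "c < pi/2"
    and da: "\<And>\<theta>. \<theta> \<in> {0..c} \<Longrightarrow> (a has_vector_derivative a' \<theta>) (at \<theta> within {0..c})"
    and ca': "continuous_on {0..c} a'"
  shows "\<i> * of_real x * integral {0..c} (\<lambda>\<theta>. a \<theta> * cis (x * sin \<theta>))
      = a c * (of_real (1 / cos c) * cis (x * sin c)) - a 0
        - integral {0..c} (\<lambda>\<theta>. (a' \<theta> * of_real (1 / cos \<theta>) + a \<theta> * of_real (sin \<theta> / (cos \<theta>)\<^sup>2))
            * cis (x * sin \<theta>))"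
proof -
  have cpos: "cos \<theta> > 0" if "\<theta> \<in> {0..c}" for \<theta> using cos_gt_zero_pi[of \<theta>] c that by auto
  have ca: "continuous_on {0..c} a" by (rule continuous_on_vector_derivative[OF da])
  define A where "A = (\<lambda>\<theta>. a \<theta> * cis (x * sin \<theta>))"
  define B where "B = (\<lambda>\<theta>. (a' \<theta> * of_real (1 / cos \<theta>) + a \<theta> * of_real (sin \<theta> / (cos \<theta>)\<^sup>2))
    * cis (x * sin \<theta>))"
  define F where "F = (\<lambda>\<theta>. a \<theta> * (of_real (1 / cos \<theta>) * cis (x * sin \<theta>)))"
  have "A integrable_on {0..c}" "B integrable_on {0..c}"
    unfolding A_def B_def
    by (intro integrable_continuous_real continuous_intros ca ca'; use cpos in fastforce)+
  hence "((\<lambda>\<theta>. B \<theta> + \<i> * of_real x * A \<theta>) has_integral integral {0..c} B + \<i> * of_real x * integral {0..c} A) {0..c}"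
    by (intro has_integral_add has_integral_mult_right integrable_integral)
  moreover have "((\<lambda>\<theta>. B \<theta> + \<i> * of_real x * A \<theta>) has_integral F c - F 0) {0..c}"
  proof (rule fundamental_theorem_of_calculus[OF c(1)])
    fix \<theta> assume th: "\<theta> \<in> {0..c}"
    show "(F has_vector_derivative B \<theta> + \<i> * of_real x * A \<theta>) (at \<theta> within {0..c})"
      unfolding A_def B_def F_def
      by (intro has_vector_derivative_sec_cis_sin da[OF th]) (use cpos[OF th] in simp)
  qed
  ultimately have "integral {0..c} B + \<i> * of_real x * integral {0..c} A = F c - F 0"
    by (rule has_integral_unique)
  thus ?thesis by (simp add: A_def B_def F_def algebra_simps)
qed

lemma norm_integral_cis_sin_remainder_le:
  fixes a a' :: "real \<Rightarrow> complex"
  assumes c: "0 \<le> c" "c < pi/2"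
    and ca: "continuous_on {0..c} a" and ca': "continuous_on {0..c} a'"
    and b0: "\<And>\<theta>. \<theta> \<in> {0..c} \<Longrightarrow> norm (a \<theta>) \<le> M0"
    and b1: "\<And>\<theta>. \<theta> \<in> {0..c} \<Longrightarrow> norm (a' \<theta>) \<le> M1"
  shows "norm (integral {0..c} (\<lambda>\<theta>. (a' \<theta> * of_real (1 / cos \<theta>) + a \<theta> * of_real (sin \<theta> / (cos \<theta>)\<^sup>2))
      * cis (x * sin \<theta>))) \<le> c * M1 / cos c + M0 * (1 / cos c - 1)"
    (is "norm (integral _ ?B) \<le> _")
proof -
  have cpos: "cos \<theta> > 0" if "\<theta> \<in> {0..c}" for \<theta> using cos_gt_zero_pi[of \<theta>] c that by auto
  have cle: "cos c \<le> cos \<theta>" if "\<theta> \<in> {0..c}" for \<theta> using cos_monotone_0_pi_le[of \<theta> c] c that by auto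
  have ccpos: "cos c > 0" using cpos[of c] c by auto
  have M0: "M0 \<ge> 0" using b0[of 0] c by (auto intro: order_trans[OF norm_ge_zero])
  have M1: "M1 \<ge> 0" using b1[of 0] c by (auto intro: order_trans[OF norm_ge_zero])
  have g: "((\<lambda>\<theta>. M1 / cos c + M0 * (sin \<theta> / (cos \<theta>)\<^sup>2)) has_integral
      c * M1 / cos c + M0 * (1 / cos c - 1)) {0..c}"
    using has_integral_const_real[of "M1 / cos c" 0 c] has_integral_sin_div_cos_squared[OF c] c
    by (intro has_integral_add has_integral_mult_right) auto
  have "norm (?B \<theta>) \<le> M1 / cos c + M0 * (sin \<theta> / (cos \<theta>)\<^sup>2)" if th: "\<theta> \<in> {0..c}" for \<theta>
  proof -
    have sin: "sin \<theta> \<ge> 0" using sin_ge_zero[of \<theta>] c th by auto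
    have "norm (?B \<theta>) = norm (a' \<theta> * of_real (1 / cos \<theta>) + a \<theta> * of_real (sin \<theta> / (cos \<theta>)\<^sup>2))"
      by (simp only: norm_mult norm_cis mult_1_right)
    also have "\<dots> \<le> norm (a' \<theta> * of_real (1 / cos \<theta>)) + norm (a \<theta> * of_real (sin \<theta> / (cos \<theta>)\<^sup>2))"
      by (rule norm_triangle_ineq)
    also have "\<dots> = norm (a' \<theta>) * (1 / cos \<theta>) + norm (a \<theta>) * (sin \<theta> / (cos \<theta>)\<^sup>2)"
      using cpos[OF th] sin by (simp only: norm_mult norm_of_real) simp
    also have "\<dots> \<le> M1 * (1 / cos c) + M0 * (sin \<theta> / (cos \<theta>)\<^sup>2)"
    proof (intro add_mono mult_mono)
      show "1 / cos \<theta> \<le> 1 / cos c" using cle[OF th] ccpos by (simp add: divide_left_mono)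
    qed (use b0[OF th] b1[OF th] cpos[OF th] sin M0 M1 in auto)
    finally show ?thesis by simp
  qed
  moreover have "?B integrable_on {0..c}"
    by (intro integrable_continuous_real continuous_intros ca ca'; use cpos in fastforce)
  ultimately have "norm (integral {0..c} ?B) \<le> integral {0..c} (\<lambda>\<theta>. M1 / cos c + M0 * (sin \<theta> / (cos \<theta>)\<^sup>2))"
    using g by (intro integral_norm_bound_integral) auto
  thus ?thesis using integral_unique[OF g] by simp
qed

lemma norm_integral_cis_sin_le:
  fixes a a' :: "real \<Rightarrow> complex"
  assumes c: "0 \<le> c" "c < pi/2" and x: "x > 0"
    and da: "\<And>\<theta>. \<theta> \<in> {0..c} \<Longrightarrow> (a has_vector_derivative a' \<theta>) (at \<theta> within {0..c})"
    and ca': "continuous_on {0..c} a'"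
    and b0: "\<And>\<theta>. \<theta> \<in> {0..c} \<Longrightarrow> norm (a \<theta>) \<le> M0"
    and b1: "\<And>\<theta>. \<theta> \<in> {0..c} \<Longrightarrow> norm (a' \<theta>) \<le> M1"
  shows "norm (integral {0..c} (\<lambda>\<theta>. a \<theta> * cis (x * sin \<theta>))) \<le> 3 * (M0 + M1) / (x * cos c)"
proof -
  have ccpos: "cos c > 0" using cos_gt_zero_pi[of c] c by auto
  have M0: "M0 \<ge> 0" using b0[of 0] c by (auto intro: order_trans[OF norm_ge_zero])
  have M1: "M1 \<ge> 0" using b1[of 0] c by (auto intro: order_trans[OF norm_ge_zero])
  define B where "B = (\<lambda>\<theta>. (a' \<theta> * of_real (1 / cos \<theta>) + a \<theta> * of_real (sin \<theta> / (cos \<theta>)\<^sup>2))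
    * cis (x * sin \<theta>))"
  have ibp: "\<i> * of_real x * integral {0..c} (\<lambda>\<theta>. a \<theta> * cis (x * sin \<theta>))
      = a c * (of_real (1 / cos c) * cis (x * sin c)) - a 0 - integral {0..c} B"
    unfolding B_def by (rule cis_sin_integration_by_parts[OF c da ca'])
  have nB: "norm (integral {0..c} B) \<le> c * M1 / cos c + M0 * (1 / cos c - 1)"
    unfolding B_def
    by (rule norm_integral_cis_sin_remainder_le[OF c continuous_on_vector_derivative[OF da] ca' b0 b1])
  have nF: "norm (a c * (of_real (1 / cos c) * cis (x * sin c))) \<le> M0 / cos c"
    using b0[of c] c ccpos by (simp add: norm_mult norm_divide divide_right_mono)
  have "x * norm (integral {0..c} (\<lambda>\<theta>. a \<theta> * cis (x * sin \<theta>)))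
      = norm (\<i> * of_real x * integral {0..c} (\<lambda>\<theta>. a \<theta> * cis (x * sin \<theta>)))"
    using x by (simp add: norm_mult)
  also have "\<dots> \<le> norm (a c * (of_real (1 / cos c) * cis (x * sin c))) + norm (a 0) + norm (integral {0..c} B)"
    unfolding ibp by (rule order_trans[OF norm_triangle_ineq4]) (simp add: norm_triangle_ineq4)
  also have "\<dots> \<le> M0 / cos c + M0 + (c * M1 / cos c + M0 * (1 / cos c - 1))"
    using nF b0[of 0] c nB by (intro add_mono) auto
  also have "\<dots> = (2 * M0 + M1 * c) / cos c" using ccpos by (simp add: field_simps)
  also have "\<dots> \<le> 3 * (M0 + M1) / cos c"
  proof -
    have "M1 * c \<le> M1 * 3" using M1 c pi_less_4 by (intro mult_left_mono) auto
    thus ?thesis using M0 ccpos by (intro divide_right_mono) auto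
  qed
  finally show ?thesis using x ccpos by (simp add: field_simps)
qed

lemma sin_ge_half_self:
  fixes d :: real assumes "0 < d" "d \<le> 1" shows "d / 2 \<le> sin d"
proof -
  obtain z where z: "0 < z" "z < d" "sin d - sin 0 = (d - 0) * cos z"
    using MVT2[OF assms(1), of sin cos] by (auto intro: DERIV_sin)
  have "cos (pi/3) \<le> cos z" using z assms pi_gt3 by (intro cos_monotone_0_pi_le) auto
  hence "d * (1/2) \<le> d * cos z" using assms by (intro mult_left_mono) (auto simp: cos_60)
  thus ?thesis using z by simp
qed

lemma norm_integral_cis_sin_initial_le:
  fixes a a' :: "real \<Rightarrow> complex"
  assumes da: "\<And>\<theta>. (a has_vector_derivative a' \<theta>) (at \<theta>)" and ca': "continuous_on UNIV a'"
    and b0: "\<And>\<theta>. norm (a \<theta>) \<le> M0" and b1: "\<And>\<theta>. norm (a' \<theta>) \<le> M1"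
    and x: "1 \<le> x"
  shows "norm (integral {0..pi/2 - 1 / sqrt x} (\<lambda>\<theta>. a \<theta> * cis (x * sin \<theta>))) \<le> 6 * (M0 + M1) / sqrt x"
proof -
  define d where "d = 1 / sqrt x"
  have sx: "sqrt x \<ge> 1" using x by simp
  have d: "0 < d" "d \<le> 1" using sx by (auto simp: d_def)
  have c: "0 \<le> pi/2 - d" "pi/2 - d < pi/2" using d pi_ge_two by auto
  have "sqrt x / 2 = x * (d / 2)" using x by (simp add: d_def real_sqrt_mult_self field_simps)
  also have "\<dots> \<le> x * cos (pi/2 - d)" using sin_ge_half_self[OF d] x by (simp add: cos_diff)
  finally have xc: "sqrt x / 2 \<le> x * cos (pi/2 - d)" .
  have M: "M0 + M1 \<ge> 0" using b0[of 0] b1[of 0] norm_ge_zero by (meson add_nonneg_nonneg order_trans)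
  have "norm (integral {0..pi/2 - d} (\<lambda>\<theta>. a \<theta> * cis (x * sin \<theta>))) \<le> 3 * (M0 + M1) / (x * cos (pi/2 - d))"
    using x c by (intro norm_integral_cis_sin_le)
      (auto intro: has_vector_derivative_at_within da b0 b1 continuous_on_subset[OF ca'])
  also have "\<dots> \<le> 3 * (M0 + M1) / (sqrt x / 2)"
    using xc sx M c by (intro divide_left_mono) (auto intro!: mult_pos_pos cos_gt_zero_pi)
  finally show ?thesis by (simp add: d_def)
qed

lemma has_integral_reflect_pi:
  fixes f :: "real \<Rightarrow> 'a::banach"
  assumes "(f has_integral i) {pi - c..pi}"
  shows "((\<lambda>\<theta>. f (pi - \<theta>)) has_integral i) {0..c}"
proof -
  have "((\<lambda>x. f (1 *\<^sub>R x + pi)) has_integral (i /\<^sub>R 1 ^ DIM(real))) (cbox ((pi - c - pi) /\<^sub>R 1) ((pi - pi) /\<^sub>R 1))"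
    using has_integral_affinity'[of f i "pi - c" pi 1 pi] assms by simp
  hence "((\<lambda>x. f (x + pi)) has_integral i) {-c..0}" by simp
  hence "((\<lambda>x. f (- x + pi)) has_integral i) {-0..- (-c)}"
    by (subst has_integral_reflect_real)
  thus ?thesis by simp
qed

lemma norm_integral_cis_sin_final_le:
  fixes a a' :: "real \<Rightarrow> complex"
  assumes da: "\<And>\<theta>. (a has_vector_derivative a' \<theta>) (at \<theta>)" and ca': "continuous_on UNIV a'"
    and b0: "\<And>\<theta>. norm (a \<theta>) \<le> M0" and b1: "\<And>\<theta>. norm (a' \<theta>) \<le> M1"
    and x: "1 \<le> x"
  shows "norm (integral {pi/2 + 1 / sqrt x..pi} (\<lambda>\<theta>. a \<theta> * cis (x * sin \<theta>))) \<le> 6 * (M0 + M1) / sqrt x"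
proof -
  let ?c = "pi/2 - 1 / sqrt x"
  have "continuous_on UNIV a"
    using da by (intro continuous_on_vector_derivative) (auto intro: has_vector_derivative_at_within)
  hence "(\<lambda>\<theta>. a \<theta> * cis (x * sin \<theta>)) integrable_on {pi - ?c..pi}"
    by (intro integrable_continuous_real continuous_intros) (auto intro: continuous_on_subset)
  hence "((\<lambda>\<theta>. a (pi - \<theta>) * cis (x * sin \<theta>)) has_integral
      integral {pi/2 + 1 / sqrt x..pi} (\<lambda>\<theta>. a \<theta> * cis (x * sin \<theta>))) {0..?c}"
    using has_integral_reflect_pi[OF integrable_integral] by fastforce
  hence "integral {pi/2 + 1 / sqrt x..pi} (\<lambda>\<theta>. a \<theta> * cis (x * sin \<theta>))
      = integral {0..?c} (\<lambda>\<theta>. a (pi - \<theta>) * cis (x * sin \<theta>))"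
    by (simp add: integral_unique)
  also have "norm \<dots> \<le> 6 * (M0 + M1) / sqrt x"
  proof (rule norm_integral_cis_sin_initial_le[OF _ _ _ _ x])
    fix \<theta>
    have "((\<lambda>\<theta>. pi - \<theta>) has_vector_derivative -1) (at \<theta>)"
      by (auto intro!: derivative_eq_intros)
    from vector_diff_chain_at[OF this da[of "pi - \<theta>"]]
    show "((\<lambda>\<theta>. a (pi - \<theta>)) has_vector_derivative - a' (pi - \<theta>)) (at \<theta>)" by (simp add: o_def)
    show "continuous_on UNIV (\<lambda>\<theta>. - a' (pi - \<theta>))"
      by (intro continuous_intros continuous_on_compose2[OF ca']) auto
  qed (use b0 b1 in auto)
  finally show ?thesis .
qed

text \<open>Cutting at distance \<open>1/\<surd>x\<close> from \<open>\<pi>/2\<close> balances the flank bounds \<open>O(1/(x cos c))\<close> against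
  the trivial bound on the middle window.\<close>
lemma norm_integral_cis_sin_le_sqrt:
  fixes a a' :: "real \<Rightarrow> complex"
  assumes da: "\<And>\<theta>. (a has_vector_derivative a' \<theta>) (at \<theta>)" and ca': "continuous_on UNIV a'"
    and b0: "\<And>\<theta>. norm (a \<theta>) \<le> M0" and b1: "\<And>\<theta>. norm (a' \<theta>) \<le> M1"
    and x: "1 \<le> x"
  shows "norm (integral {0..pi} (\<lambda>\<theta>. a \<theta> * cis (x * sin \<theta>))) \<le> (12 * (M0 + M1) + 2 * M0) / sqrt x"
proof -
  define c where "c = pi/2 - 1 / sqrt x"
  have "0 \<le> 1 / sqrt x" "1 / sqrt x \<le> 1" using x by simp_all
  hence c: "0 \<le> c" "c \<le> pi - c" unfolding c_def using pi_ge_two by linarith+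
  let ?f = "\<lambda>\<theta>. a \<theta> * cis (x * sin \<theta>)"
  have "continuous_on UNIV a"
    using da by (intro continuous_on_vector_derivative) (auto intro: has_vector_derivative_at_within)
  hence fi: "?f integrable_on {u..v}" for u v
    by (intro integrable_continuous_real continuous_intros) (auto intro: continuous_on_subset)
  have "norm (integral {c..pi - c} ?f) \<le> integral {c..pi - c} (\<lambda>_. M0)"
    by (rule integral_norm_bound_integral) (use fi b0 in \<open>auto simp: norm_mult\<close>)
  also have "\<dots> = 2 * M0 / sqrt x" using c by (simp add: c_def)
  finally have middle: "norm (integral {c..pi - c} ?f) \<le> 2 * M0 / sqrt x" .
  have "pi - c = pi/2 + 1 / sqrt x" by (simp add: c_def)
  hence flanks: "norm (integral {0..c} ?f) \<le> 6 * (M0 + M1) / sqrt x"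
    "norm (integral {pi - c..pi} ?f) \<le> 6 * (M0 + M1) / sqrt x"
    unfolding c_def using norm_integral_cis_sin_initial_le[OF da ca' b0 b1 x]
      norm_integral_cis_sin_final_le[OF da ca' b0 b1 x] by simp_all
  have "integral {0..pi} ?f = integral {0..c} ?f + integral {c..pi - c} ?f + integral {pi - c..pi} ?f"
    using c fi by (simp add: Henstock_Kurzweil_Integration.integral_combine add.assoc)
  hence "norm (integral {0..pi} ?f)
      \<le> norm (integral {0..c} ?f) + norm (integral {c..pi - c} ?f) + norm (integral {pi - c..pi} ?f)"
    by (simp add: order_trans[OF norm_triangle_ineq] norm_triangle_le)
  also have "\<dots> \<le> (12 * (M0 + M1) + 2 * M0) / sqrt x"
    using flanks middle by (simp add: add_divide_distrib)
  finally show ?thesis .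
qed


section \<open>Decay of the Hankel functions and their derivatives\<close>

definition bessel_osc :: "int \<Rightarrow> real \<Rightarrow> complex" where
  "bessel_osc n x = integral {0..pi} (\<lambda>\<theta>. cis (x * sin \<theta> - of_int n * \<theta>))"

definition bessel_osc' :: "int \<Rightarrow> real \<Rightarrow> complex" where
  "bessel_osc' n x = integral {0..pi} (\<lambda>\<theta>. \<i> * of_real (sin \<theta>) * cis (x * sin \<theta> - of_int n * \<theta>))"

definition hankel1' :: "int \<Rightarrow> real \<Rightarrow> complex" where
  "hankel1' n x = bessel_osc' n x / pi - \<i> * of_real (schlaefli_tail' n x) / pi"

lemma hankel1_eq_bessel_osc_schlaefli_tail:
  assumes "\<bar>of_int n\<bar> < x"
  shows "hankel1 n x = bessel_osc n x / pi - \<i> * of_real (schlaefli_tail n x) / pi"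
proof -
  have hi: "((\<lambda>\<theta>. cis (x * sin \<theta> - of_int n * \<theta>)) has_integral bessel_osc n x) {0..pi}"
    unfolding bessel_osc_def by (intro integrable_integral integrable_continuous_real continuous_intros)
  have "((\<lambda>\<theta>. cos (of_int n * \<theta> - x * sin \<theta>)) has_integral Re (bessel_osc n x)) {0..pi}"
    using has_integral_Re[OF hi] by (simp add: cos_diff mult.commute)
  moreover have "((\<lambda>\<theta>. sin (x * sin \<theta> - of_int n * \<theta>)) has_integral Im (bessel_osc n x)) {0..pi}"
    using has_integral_Im[OF hi] by simp
  ultimately show ?thesis
    unfolding hankel1_def besselJ_def besselY_def schlaefli_tail_def schlaefli_weight_def
    by (simp add: integral_unique complex_eq_iff)
qed

lemma bessel_osc_has_vector_derivative: "(bessel_osc n has_vector_derivative bessel_osc' n x) (at x)"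
proof -
  have "((\<lambda>x. integral (cbox 0 pi) (\<lambda>\<theta>. cis (x * sin \<theta> - of_int n * \<theta>))) has_vector_derivative
      integral (cbox 0 pi) (\<lambda>\<theta>. \<i> * of_real (sin \<theta>) * cis (x * sin \<theta> - of_int n * \<theta>))) (at x within UNIV)"
  proof (rule leibniz_rule_vector_derivative)
    fix y t :: real
    show "((\<lambda>y. cis (y * sin t - of_int n * t)) has_vector_derivative
        \<i> * of_real (sin t) * cis (y * sin t - of_int n * t)) (at y within UNIV)"
      by (rule has_vector_derivative_cis) (auto intro!: derivative_eq_intros)
    show "(\<lambda>\<theta>. cis (y * sin \<theta> - of_int n * \<theta>)) integrable_on cbox 0 pi"
      by (intro integrable_continuous continuous_intros)
  next
    show "continuous_on (UNIV \<times> cbox 0 pi) (\<lambda>(y, t). \<i> * of_real (sin t) * cis (y * sin t - of_int n * t))"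
      by (auto intro!: continuous_intros simp: split_beta)
  qed auto
  thus ?thesis unfolding bessel_osc_def bessel_osc'_def by simp
qed

lemma hankel1_has_vector_derivative:
  assumes x: "3 + \<bar>of_int n\<bar> < x"
  shows "(hankel1 n has_vector_derivative hankel1' n x) (at x)"
proof -
  have "((\<lambda>y. bessel_osc n y / pi - \<i> * of_real (schlaefli_tail n y) / pi) has_vector_derivative
      hankel1' n x) (at x)"
    unfolding hankel1'_def
    using bessel_osc_has_vector_derivative[of n x] schlaefli_tail_has_real_derivative[OF x]
    by (auto intro!: derivative_eq_intros simp: has_real_derivative_iff_has_vector_derivative[symmetric])
  thus ?thesis
    by (rule has_vector_derivative_transform_within_open[where S = "{\<bar>of_int n\<bar><..}"])
      (use x hankel1_eq_bessel_osc_schlaefli_tail in auto)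
qed

lemma has_vector_derivative_cis_linear:
  "((\<lambda>\<theta>. cis (- (of_int n * \<theta>))) has_vector_derivative - \<i> * of_int n * cis (- (of_int n * \<theta>))) (at \<theta>)"
  by (rule has_vector_derivative_cis[THEN has_vector_derivative_eq_rhs])
    (auto intro!: derivative_eq_intros)

lemma cis_phase_split: "cis (x * sin \<theta> - of_int n * \<theta>) = cis (- (of_int n * \<theta>)) * cis (x * sin \<theta>)"
  by (simp add: cis_mult)

lemma norm_bessel_osc_le:
  assumes "1 \<le> x"
  shows "norm (bessel_osc n x) \<le> (14 + 12 * \<bar>of_int n\<bar>) / sqrt x"
proof -
  have "norm (integral {0..pi} (\<lambda>\<theta>. cis (- (of_int n * \<theta>)) * cis (x * sin \<theta>)))
      \<le> (12 * (1 + \<bar>of_int n\<bar>) + 2 * 1) / sqrt x"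
  proof (rule norm_integral_cis_sin_le_sqrt[OF has_vector_derivative_cis_linear])
    show "continuous_on UNIV (\<lambda>\<theta>. - \<i> * of_int n * cis (- (of_int n * \<theta>)))" by (intro continuous_intros)
    show "norm (- \<i> * of_int n * cis (- (of_int n * \<theta>))) \<le> \<bar>of_int n\<bar>" for \<theta>
      by (simp add: norm_mult)
  qed (use assms in auto)
  thus ?thesis unfolding bessel_osc_def cis_phase_split by (simp add: algebra_simps)
qed

lemma norm_bessel_osc'_le:
  assumes "1 \<le> x"
  shows "norm (bessel_osc' n x) \<le> (26 + 12 * \<bar>of_int n\<bar>) / sqrt x"
proof -
  let ?a = "\<lambda>\<theta>. \<i> * (of_real (sin \<theta>) * cis (- (of_int n * \<theta>)))"
  let ?a' = "\<lambda>\<theta>. \<i> * of_real (cos \<theta>) * cis (- (of_int n * \<theta>))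
                 + of_real (sin \<theta>) * of_int n * cis (- (of_int n * \<theta>))"
  have "(?a has_vector_derivative ?a' \<theta>) (at \<theta>)" for \<theta>
  proof -
    have "((\<lambda>\<theta>. complex_of_real (sin \<theta>)) has_vector_derivative of_real (cos \<theta>)) (at \<theta>)"
      by (auto intro!: derivative_eq_intros)
    from has_vector_derivative_mult_right[OF has_vector_derivative_mult[OF this has_vector_derivative_cis_linear], of \<i>]
    show ?thesis by (rule has_vector_derivative_eq_rhs) (simp add: algebra_simps)
  qed
  hence "norm (integral {0..pi} (\<lambda>\<theta>. ?a \<theta> * cis (x * sin \<theta>))) \<le> (12 * (1 + (1 + \<bar>of_int n\<bar>)) + 2 * 1) / sqrt x"
  proof (rule norm_integral_cis_sin_le_sqrt)
    show "continuous_on UNIV ?a'" by (intro continuous_intros)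
    show "norm (?a \<theta>) \<le> 1" for \<theta> by (simp add: norm_mult)
    show "norm (?a' \<theta>) \<le> 1 + \<bar>of_int n\<bar>" for \<theta>
    proof -
      have "norm (?a' \<theta>) \<le> \<bar>cos \<theta>\<bar> + \<bar>sin \<theta>\<bar> * \<bar>of_int n\<bar>"
        using norm_triangle_ineq[of "\<i> * of_real (cos \<theta>) * cis (- (of_int n * \<theta>))"
            "of_real (sin \<theta>) * of_int n * cis (- (of_int n * \<theta>))"]
        by (simp add: norm_mult)
      also have "\<dots> \<le> 1 + 1 * \<bar>of_int n\<bar>" by (intro add_mono mult_right_mono) auto
      finally show ?thesis by simp
    qed
  qed (use assms in auto)
  thus ?thesis unfolding bessel_osc'_def cis_phase_split by (simp add: algebra_simps)
qed

lemma abs_schlaefli_tail_le_sqrt: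
  assumes x: "4 + 2 * \<bar>of_int n\<bar> \<le> x"
  shows "\<bar>schlaefli_tail n x\<bar> \<le> 4 / sqrt x" and "\<bar>schlaefli_tail' n x\<bar> \<le> 4 / sqrt x"
proof -
  have "x * 1 \<le> x * x" using x by (intro mult_left_mono) auto
  hence "sqrt x \<le> x" using x by (intro real_le_lsqrt) (auto simp: power2_eq_square)
  hence "2 / (x / 2) \<le> 4 / sqrt x" using x by (simp add: divide_left_mono)
  moreover have "2 / (x - \<bar>of_int n\<bar>) \<le> 2 / (x / 2)" "2 / (x - 1 - \<bar>of_int n\<bar>) \<le> 2 / (x / 2)"
    using x by (intro divide_left_mono; simp)+
  moreover have "\<bar>of_int n\<bar> < x" "1 + \<bar>of_int n\<bar> < x" using x by linarith+
  ultimately show "\<bar>schlaefli_tail n x\<bar> \<le> 4 / sqrt x" and "\<bar>schlaefli_tail' n x\<bar> \<le> 4 / sqrt x"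
    using schlaefli_tail_estimate(2)[of n x] schlaefli_tail'_estimate(2)[of n x] by linarith+
qed

lemma divide_pi_le_self: "0 \<le> (a::real) \<Longrightarrow> a / pi \<le> a"
  using divide_left_mono[of 1 pi a] pi_ge_two by simp

lemma norm_hankel1_le:
  assumes x: "4 + 2 * \<bar>of_int n\<bar> \<le> x"
  shows "norm (hankel1 n x) \<le> (30 + 12 * \<bar>of_int n\<bar>) / sqrt x"
proof -
  have x1: "1 \<le> x" using x by linarith
  have eq: "hankel1 n x = bessel_osc n x / pi - \<i> * of_real (schlaefli_tail n x) / pi"
    by (rule hankel1_eq_bessel_osc_schlaefli_tail) (use x in linarith)
  have "norm (hankel1 n x) \<le> norm (bessel_osc n x) / pi + \<bar>schlaefli_tail n x\<bar> / pi"
    unfolding eq by (rule order_trans[OF norm_triangle_ineq4]) (simp add: norm_mult norm_divide)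
  also have "\<dots> \<le> norm (bessel_osc n x) + \<bar>schlaefli_tail n x\<bar>"
    by (intro add_mono divide_pi_le_self) auto
  also have "\<dots> \<le> (14 + 12 * \<bar>of_int n\<bar>) / sqrt x + 4 / sqrt x"
    using norm_bessel_osc_le[OF x1, of n] abs_schlaefli_tail_le_sqrt(1)[OF x] by linarith
  also have "\<dots> \<le> (30 + 12 * \<bar>of_int n\<bar>) / sqrt x"
    using x by (simp add: add_divide_distrib[symmetric] divide_right_mono)
  finally show ?thesis .
qed

lemma norm_hankel1'_le:
  assumes x: "4 + 2 * \<bar>of_int n\<bar> \<le> x"
  shows "norm (hankel1' n x) \<le> (30 + 12 * \<bar>of_int n\<bar>) / sqrt x"
proof -
  have x1: "1 \<le> x" using x by linarith
  have "norm (hankel1' n x) \<le> norm (bessel_osc' n x) / pi + \<bar>schlaefli_tail' n x\<bar> / pi"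
    unfolding hankel1'_def
    by (rule order_trans[OF norm_triangle_ineq4]) (simp add: norm_mult norm_divide)
  also have "\<dots> \<le> norm (bessel_osc' n x) + \<bar>schlaefli_tail' n x\<bar>"
    by (intro add_mono divide_pi_le_self) auto
  also have "\<dots> \<le> (26 + 12 * \<bar>of_int n\<bar>) / sqrt x + 4 / sqrt x"
    using norm_bessel_osc'_le[OF x1, of n] abs_schlaefli_tail_le_sqrt(2)[OF x] by linarith
  finally show ?thesis by (simp add: add_divide_distrib[symmetric])
qed


section \<open>Directional derivatives of the radial modes at the receivers\<close>

lemma linear_of_real_mult:
  fixes L :: "complex \<Rightarrow> complex"
  assumes "linear L" shows "L (of_real t * v) = of_real t * L v"
  using linear_scale[OF assms, of t v] by (simp add: scaleR_conv_of_real)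

lemma has_vector_derivative_along_curve:
  fixes f :: "'a::real_normed_vector \<Rightarrow> 'b::real_normed_vector"
  assumes fd: "(f has_derivative L) (at (\<gamma> 0))" and gd: "(\<gamma> has_vector_derivative v) (at 0)"
  shows "((\<lambda>t. f (\<gamma> t)) has_vector_derivative L v) (at 0)"
proof -
  have "((\<lambda>t. f (\<gamma> t)) has_derivative (\<lambda>t. L (t *\<^sub>R v))) (at 0)"
    using has_derivative_compose[OF gd[unfolded has_vector_derivative_def] fd] by (simp add: o_def)
  thus ?thesis
    unfolding has_vector_derivative_def linear_scale[OF has_derivative_linear[OF fd]] .
qed

lemma pd1_pd2_eq:
  fixes f :: "complex \<Rightarrow> complex"
  assumes fd: "(f has_derivative L) (at z)"
  shows "pd1 f z = L 1" and "pd2 f z = L \<i>"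
proof -
  have "((\<lambda>t. f (z + of_real t * v)) has_vector_derivative L v) (at 0)" for v
    by (rule has_vector_derivative_along_curve) (use fd in \<open>auto intro!: derivative_eq_intros\<close>)
  from this[of 1] this[of \<i>] show "pd1 f z = L 1" and "pd2 f z = L \<i>"
    unfolding pd1_def pd2_def by (auto simp: vector_derivative_at mult.commute)
qed

lemma radial_mode_differentiable:
  assumes z: "z \<noteq> 0" and hd: "(hankel1 n has_vector_derivative D) (at (\<kappa> * cmod z))"
  shows "\<exists>L. (radial_mode \<kappa> n has_derivative L) (at z)"
proof -
  have "((\<lambda>w. \<kappa> * cmod w) has_derivative (\<lambda>h. \<kappa> * (h \<bullet> sgn z))) (at z)"
    using has_derivative_norm[OF z] by (auto intro!: derivative_eq_intros)
  from has_derivative_compose[OF this hd[unfolded has_vector_derivative_def]]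
  have h: "((\<lambda>w. hankel1 n (\<kappa> * cmod w)) has_derivative (\<lambda>h. (\<kappa> * (h \<bullet> sgn z)) *\<^sub>R D)) (at z)"
    by (simp add: o_def)
  have "complex_of_real (cmod z) \<noteq> 0" "z / of_real (cmod z) \<noteq> 0" using z by simp_all
  note phase = has_derivative_divide[OF has_derivative_ident
      has_derivative_of_real[OF has_derivative_norm[OF z]] this(1)]
  show ?thesis
    unfolding radial_mode_def[abs_def]
    using has_derivative_mult[OF h has_derivative_power_int[OF \<open>z / of_real (cmod z) \<noteq> 0\<close> phase]] by blast
qed

lemma radial_mode_polar:
  assumes "r > 0"
  shows "radial_mode \<kappa> n (of_real r * cis \<theta>) = hankel1 n (\<kappa> * r) * cis (of_int n * \<theta>)"
proof -
  have "cmod (of_real r * cis \<theta>) = r" using assms by (simp add: norm_mult)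
  moreover have "of_real r * cis \<theta> / of_real r = cis \<theta>" using assms by simp
  ultimately show ?thesis unfolding radial_mode_def by (simp add: cis_power_int)
qed

lemma radial_mode_derivative_radial:
  assumes R: "R > 0" and big: "3 + \<bar>of_int n\<bar> < \<kappa> * R"
    and fd: "(radial_mode \<kappa> n has_derivative L) (at (of_real R * cis \<theta>))"
  shows "L (cis \<theta>) = of_real \<kappa> * hankel1' n (\<kappa> * R) * cis (of_int n * \<theta>)"
proof -
  let ?\<gamma> = "\<lambda>t. of_real (R + t) * cis \<theta>"
  have "((\<lambda>t. radial_mode \<kappa> n (?\<gamma> t)) has_vector_derivative L (cis \<theta>)) (at 0)"
    by (rule has_vector_derivative_along_curve) (use fd in \<open>auto intro!: derivative_eq_intros\<close>)
  moreover have "((\<lambda>t. radial_mode \<kappa> n (?\<gamma> t)) has_vector_derivative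
      (\<kappa> *\<^sub>R hankel1' n (\<kappa> * R)) * cis (of_int n * \<theta>)) (at 0)"
  proof (rule has_vector_derivative_transform_within_open)
    have "((\<lambda>t. \<kappa> * (R + t)) has_vector_derivative \<kappa>) (at 0)"
      by (auto intro!: derivative_eq_intros simp flip: has_real_derivative_iff_has_vector_derivative)
    from vector_diff_chain_at[OF this, of "hankel1 n"] hankel1_has_vector_derivative[OF big]
    show "((\<lambda>t. hankel1 n (\<kappa> * (R + t)) * cis (of_int n * \<theta>)) has_vector_derivative
        (\<kappa> *\<^sub>R hankel1' n (\<kappa> * R)) * cis (of_int n * \<theta>)) (at 0)"
      by (intro has_vector_derivative_mult_left) (simp add: o_def)
    show "hankel1 n (\<kappa> * (R + t)) * cis (of_int n * \<theta>) = radial_mode \<kappa> n (?\<gamma> t)" if "t \<in> {- R<..}" for t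
      using that radial_mode_polar[of "R + t" \<kappa> n \<theta>] by simp
  qed (use R in auto)
  ultimately show ?thesis using vector_derivative_unique_at by (fastforce simp: scaleR_conv_of_real)
qed

lemma radial_mode_derivative_angular:
  assumes R: "R > 0"
    and fd: "(radial_mode \<kappa> n has_derivative L) (at (of_real R * cis \<theta>))"
  shows "L (\<i> * cis \<theta>) = \<i> * of_int n * hankel1 n (\<kappa> * R) * cis (of_int n * \<theta>) / of_real R"
proof -
  let ?\<gamma> = "\<lambda>t. of_real R * cis (\<theta> + t)"
  have cis_lin: "((\<lambda>t. cis (a + b * t)) has_vector_derivative \<i> * of_real b * cis a) (at 0)" for a b
    by (rule has_vector_derivative_cis[THEN has_vector_derivative_eq_rhs]) (auto intro!: derivative_eq_intros)
  have "((\<lambda>t. radial_mode \<kappa> n (?\<gamma> t)) has_vector_derivative L (of_real R * (\<i> * cis \<theta>))) (at 0)"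
    by (rule has_vector_derivative_along_curve)
      (use fd has_vector_derivative_mult_right[OF cis_lin[of \<theta> 1], of "of_real R"] in simp_all)
  moreover have "radial_mode \<kappa> n (?\<gamma> t) = hankel1 n (\<kappa> * R) * cis (of_int n * \<theta> + of_int n * t)" for t
    using radial_mode_polar[OF R, of \<kappa> n "\<theta> + t"] by (simp add: algebra_simps)
  hence "((\<lambda>t. radial_mode \<kappa> n (?\<gamma> t)) has_vector_derivative
      hankel1 n (\<kappa> * R) * (\<i> * of_int n * cis (of_int n * \<theta>))) (at 0)"
    using has_vector_derivative_mult_right[OF cis_lin[of "of_int n * \<theta>" "of_int n"], of "hankel1 n (\<kappa> * R)"]
    by simp
  ultimately have "of_real R * L (\<i> * cis \<theta>) = hankel1 n (\<kappa> * R) * (\<i> * of_int n * cis (of_int n * \<theta>))"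
    using vector_derivative_unique_at linear_of_real_mult[OF has_derivative_linear[OF fd]] by metis
  thus ?thesis using R by (simp add: field_simps)
qed

text \<open>With directions encoded as complex numbers, \<open>d = cis \<theta>\<close> and \<open>d\<^sup>\<perp> = i cis \<theta>\<close>.\<close>
lemma cdot_pd_eq:
  fixes f :: "complex \<Rightarrow> complex"
  assumes fd: "(f has_derivative L) (at z)"
  shows "cdot (pd1 f z, pd2 f z) (cos \<theta>, sin \<theta>) = cnj (L (cis \<theta>))"
    and "cdot (pd1 f z, pd2 f z) (- sin \<theta>, cos \<theta>) = cnj (L (\<i> * cis \<theta>))"
    and "cdot (pd2 f z, - pd1 f z) (cos \<theta>, sin \<theta>) = cnj (L (\<i> * cis \<theta>))"
    and "cdot (pd2 f z, - pd1 f z) (- sin \<theta>, cos \<theta>) = - cnj (L (cis \<theta>))"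
proof -
  note lin = has_derivative_linear[OF fd]
  have "cis \<theta> = of_real (cos \<theta>) * 1 + of_real (sin \<theta>) * \<i>" "\<i> * cis \<theta> = of_real (- sin \<theta>) * 1 + of_real (cos \<theta>) * \<i>"
    by (simp_all add: complex_eq_iff)
  hence dirs: "L (cis \<theta>) = of_real (cos \<theta>) * L 1 + of_real (sin \<theta>) * L \<i>"
    "L (\<i> * cis \<theta>) = of_real (- sin \<theta>) * L 1 + of_real (cos \<theta>) * L \<i>"
    by (simp_all only: linear_add[OF lin] linear_of_real_mult[OF lin])
  show "cdot (pd1 f z, pd2 f z) (cos \<theta>, sin \<theta>) = cnj (L (cis \<theta>))"
    and "cdot (pd1 f z, pd2 f z) (- sin \<theta>, cos \<theta>) = cnj (L (\<i> * cis \<theta>))"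
    and "cdot (pd2 f z, - pd1 f z) (cos \<theta>, sin \<theta>) = cnj (L (\<i> * cis \<theta>))"
    and "cdot (pd2 f z, - pd1 f z) (- sin \<theta>, cos \<theta>) = - cnj (L (cis \<theta>))"
    unfolding cdot_def pd1_pd2_eq[OF fd] dirs by (simp_all add: algebra_simps)
qed

lemma cdot_HP_HS_polar:
  fixes R \<kappa> \<theta> :: real and m :: int
  assumes R: "R > 0" and big: "3 + \<bar>of_int m\<bar> < \<kappa> * R"
  defines "z \<equiv> of_real R * cis \<theta>"
  shows "cdot (HP \<kappa> m z) (cos \<theta>, sin \<theta>) = cnj (of_real \<kappa> * hankel1' m (\<kappa> * R) * cis (of_int m * \<theta>))"
    and "cdot (HP \<kappa> m z) (- sin \<theta>, cos \<theta>) = cnj (\<i> * of_int m * hankel1 m (\<kappa> * R) * cis (of_int m * \<theta>) / of_real R)"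
    and "cdot (HS \<kappa> m z) (cos \<theta>, sin \<theta>) = cnj (\<i> * of_int m * hankel1 m (\<kappa> * R) * cis (of_int m * \<theta>) / of_real R)"
    and "cdot (HS \<kappa> m z) (- sin \<theta>, cos \<theta>) = - cnj (of_real \<kappa> * hankel1' m (\<kappa> * R) * cis (of_int m * \<theta>))"
proof -
  have "z \<noteq> 0" "cmod z = R" using R by (simp_all add: z_def norm_mult)
  then obtain L where fd: "(radial_mode \<kappa> m has_derivative L) (at z)"
    using radial_mode_differentiable hankel1_has_vector_derivative[OF big] by metis
  note radial = radial_mode_derivative_radial[OF R big fd[unfolded z_def]]
    and angular = radial_mode_derivative_angular[OF R fd[unfolded z_def]]
  show "cdot (HP \<kappa> m z) (cos \<theta>, sin \<theta>) = cnj (of_real \<kappa> * hankel1' m (\<kappa> * R) * cis (of_int m * \<theta>))"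
    and "cdot (HP \<kappa> m z) (- sin \<theta>, cos \<theta>) = cnj (\<i> * of_int m * hankel1 m (\<kappa> * R) * cis (of_int m * \<theta>) / of_real R)"
    and "cdot (HS \<kappa> m z) (cos \<theta>, sin \<theta>) = cnj (\<i> * of_int m * hankel1 m (\<kappa> * R) * cis (of_int m * \<theta>) / of_real R)"
    and "cdot (HS \<kappa> m z) (- sin \<theta>, cos \<theta>) = - cnj (of_real \<kappa> * hankel1' m (\<kappa> * R) * cis (of_int m * \<theta>))"
    unfolding HP_def HS_def cdot_pd_eq[OF fd] radial angular by simp_all
qed


section \<open>The Gram matrix of the receiver data\<close>

lemma sum_lessThan_double:
  fixes N :: nat shows "(\<Sum>i<2*N. f i) = (\<Sum>i<N. f i) + (\<Sum>i<N. f (i + N))"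
proof -
  have "(\<Sum>i<2*N. f i) = (\<Sum>i<N. f i) + (\<Sum>i\<in>{N..<2*N}. f i)"
    by (metis sum.union_disjoint finite_lessThan finite_atLeastLessThan ivl_disj_int_one(2)
        ivl_disj_un_one(2) lessThan_atLeast0 mult_2 le_add2)
  also have "(\<Sum>i\<in>{N..<2*N}. f i) = (\<Sum>i\<in>{0..<N}. f (i + N))"
    using sum.shift_bounds_nat_ivl[of f 0 N N] by (simp add: mult_2)
  finally show ?thesis by (simp add: atLeast0LessThan)
qed

lemma sum_cis_theta_r:
  fixes N :: nat and k :: int
  assumes N: "N > 0" and k: "\<bar>k\<bar> < int N"
  shows "(\<Sum>j<N. cis (of_int k * theta_r N (j+1))) = (if k = 0 then of_nat N else 0)"
proof (cases "k = 0")
  case False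
  define w where "w = cis (2 * pi * of_int k / real N)"
  have pow: "cis (of_int k * theta_r N (j+1)) = w ^ (j+1)" for j
  proof -
    have "w ^ (j+1) = cis (real (j+1) * (2 * pi * of_int k / real N))" unfolding w_def by (simp only: Complex.DeMoivre)
    moreover have "real (j+1) * (2 * pi * of_int k / real N) = of_int k * theta_r N (j+1)"
      by (simp add: theta_r_def)
    ultimately show ?thesis by simp
  qed
  have "w \<noteq> 1"
  proof
    assume "w = 1"
    hence "cos (2 * pi * of_int k / real N) = 1" unfolding w_def by (simp add: complex_eq_iff)
    then obtain j :: int where "2 * pi * of_int k / real N = of_int j * 2 * pi"
      by (auto simp: cos_one_2pi_int)
    hence "real_of_int k = real_of_int j * real N" using N by (simp add: field_simps)
    hence kj: "k = j * int N" by (metis of_int_eq_iff of_int_mult of_int_of_nat_eq)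
    with False have "1 \<le> \<bar>j\<bar>" by auto
    hence "1 * int N \<le> \<bar>j\<bar> * int N" by (intro mult_right_mono) auto
    thus False using k kj by (simp add: abs_mult)
  qed
  moreover have "w ^ N = 1"
    unfolding w_def Complex.DeMoivre using N by simp
  ultimately have "w * (\<Sum>j<N. w ^ j) = 0" by (simp add: geometric_sum)
  thus ?thesis unfolding pow using False by (simp add: sum_distrib_left)
qed simp

text \<open>In the P-columns \<open>par_coeff\<close> is the radial
  coefficient \<open>\<kappa>\<^sub>P H\<^sub>m'(\<kappa>\<^sub>P R)\<close> and \<open>perp_coeff\<close> the angular one; in the S-columns the roles are
  swapped, with radial coefficient \<open>-\<kappa>\<^sub>S H\<^sub>m'(\<kappa>\<^sub>S R)\<close>.\<close>
definition mode_index :: "nat \<Rightarrow> nat \<Rightarrow> int" where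
  "mode_index K l = (if l < 2*K+1 then int l - int K else int l - int (2*K+1) - int K)"

definition par_coeff :: "real \<Rightarrow> real \<Rightarrow> nat \<Rightarrow> real \<Rightarrow> nat \<Rightarrow> complex" where
  "par_coeff \<kappa>P \<kappa>S K R l =
    (if l < 2*K+1 then of_real \<kappa>P * hankel1' (mode_index K l) (\<kappa>P * R)
     else \<i> * of_int (mode_index K l) * hankel1 (mode_index K l) (\<kappa>S * R) / of_real R)"

definition perp_coeff :: "real \<Rightarrow> real \<Rightarrow> nat \<Rightarrow> real \<Rightarrow> nat \<Rightarrow> complex" where
  "perp_coeff \<kappa>P \<kappa>S K R l =
    (if l < 2*K+1 then \<i> * of_int (mode_index K l) * hankel1 (mode_index K l) (\<kappa>P * R) / of_real R
     else - (of_real \<kappa>S * hankel1' (mode_index K l) (\<kappa>S * R)))"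

lemma abs_mode_index_le: "l < 4*K+2 \<Longrightarrow> \<bar>mode_index K l\<bar> \<le> int K"
  unfolding mode_index_def by auto

lemma mode_index_eq_imp_types_differ:
  assumes "l < 4*K+2" "l' < 4*K+2" "mode_index K l = mode_index K l'" "l \<noteq> l'"
  shows "l < 2*K+1 \<longleftrightarrow> \<not> l' < 2*K+1"
  using assms unfolding mode_index_def by (auto split: if_splits)

lemma Hfield_eq:
  "Hfield \<kappa>P \<kappa>S K l = (if l < 2*K+1 then HP \<kappa>P (mode_index K l) else HS \<kappa>S (mode_index K l))"
  by (simp add: Hfield_def mode_index_def fun_eq_iff)

locale receiver_array =
  fixes \<kappa>P \<kappa>S :: real and K Nr :: nat and R :: real
  assumes \<kappa>P: "\<kappa>P > 0" and \<kappa>S: "\<kappa>S > 0" and R: "1 \<le> R"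
    and far_P: "4 + 2 * real K \<le> \<kappa>P * R" and far_S: "4 + 2 * real K \<le> \<kappa>S * R"
    and Nr: "2*K+1 \<le> Nr"
begin

abbreviation "par \<equiv> par_coeff \<kappa>P \<kappa>S K R"
abbreviation "perp \<equiv> perp_coeff \<kappa>P \<kappa>S K R"

lemma far_mode_index:
  assumes "l < 4*K+2"
  shows "4 + 2 * \<bar>of_int (mode_index K l)\<bar> \<le> \<kappa>P * R" "4 + 2 * \<bar>of_int (mode_index K l)\<bar> \<le> \<kappa>S * R"
proof -
  have "\<bar>real_of_int (mode_index K l)\<bar> \<le> real K"
    using abs_mode_index_le[OF assms] by (metis of_int_abs of_int_le_iff of_int_of_nat_eq)
  thus "4 + 2 * \<bar>of_int (mode_index K l)\<bar> \<le> \<kappa>P * R" "4 + 2 * \<bar>of_int (mode_index K l)\<bar> \<le> \<kappa>S * R"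
    using far_P far_S by linarith+
qed

lemma Ymat_par:
  assumes l: "l < 4*K+2" and i: "i < Nr"
  shows "Ymat \<kappa>P \<kappa>S K Nr R i l = cnj (par l * cis (of_int (mode_index K l) * theta_r Nr (i+1)))"
  using i far_mode_index[OF l] R
    cdot_HP_HS_polar(1)[where \<kappa> = \<kappa>P and m = "mode_index K l" and \<theta> = "theta_r Nr (i+1)"]
    cdot_HP_HS_polar(3)[where \<kappa> = \<kappa>S and m = "mode_index K l" and \<theta> = "theta_r Nr (i+1)"]
  by (simp add: Ymat_def Let_def x_r_def par_coeff_def Hfield_eq)

lemma Ymat_perp:
  assumes l: "l < 4*K+2" and i: "i < Nr"
  shows "Ymat \<kappa>P \<kappa>S K Nr R (i + Nr) l = cnj (perp l * cis (of_int (mode_index K l) * theta_r Nr (i+1)))"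
  using i far_mode_index[OF l] R
    cdot_HP_HS_polar(2)[where \<kappa> = \<kappa>P and m = "mode_index K l" and \<theta> = "theta_r Nr (i+1)"]
    cdot_HP_HS_polar(4)[where \<kappa> = \<kappa>S and m = "mode_index K l" and \<theta> = "theta_r Nr (i+1)"]
  by (simp add: Ymat_def Let_def x_r_def perp_coeff_def Hfield_eq)

lemma YstarY_eq:
  assumes l: "l < 4*K+2" and l': "l' < 4*K+2"
  shows "YstarY \<kappa>P \<kappa>S K Nr R l l' =
    (if mode_index K l = mode_index K l'
     then of_nat Nr * (par l * cnj (par l') + perp l * cnj (perp l')) else 0)"
proof -
  let ?m = "mode_index K l" and ?m' = "mode_index K l'"
  let ?S = "\<Sum>j<Nr. cis (of_int (?m - ?m') * theta_r Nr (j+1))"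
  have conj_mode: "cnj (cnj (c * cis (of_int ?m * t))) * cnj (c' * cis (of_int ?m' * t))
      = c * cnj c' * cis (of_int (?m - ?m') * t)" for c c' t
    by (simp add: cis_cnj cis_mult algebra_simps)
  have "YstarY \<kappa>P \<kappa>S K Nr R l l' =
      (\<Sum>j<Nr. cnj (Ymat \<kappa>P \<kappa>S K Nr R j l) * Ymat \<kappa>P \<kappa>S K Nr R j l')
      + (\<Sum>j<Nr. cnj (Ymat \<kappa>P \<kappa>S K Nr R (j + Nr) l) * Ymat \<kappa>P \<kappa>S K Nr R (j + Nr) l')"
    unfolding YstarY_def by (rule sum_lessThan_double)
  also have "\<dots> = (\<Sum>j<Nr. par l * cnj (par l') * cis (of_int (?m - ?m') * theta_r Nr (j+1)))
      + (\<Sum>j<Nr. perp l * cnj (perp l') * cis (of_int (?m - ?m') * theta_r Nr (j+1)))"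
    by (intro arg_cong2[where f = "(+)"] sum.cong refl)
      (simp_all only: lessThan_iff Ymat_par[OF l] Ymat_par[OF l'] Ymat_perp[OF l] Ymat_perp[OF l'] conj_mode)
  also have "\<dots> = (par l * cnj (par l') + perp l * cnj (perp l')) * ?S"
    by (simp add: sum_distrib_left algebra_simps)
  also have "?S = (if ?m - ?m' = 0 then of_nat Nr else 0)"
  proof (rule sum_cis_theta_r)
    have "\<bar>?m\<bar> \<le> int K" "\<bar>?m'\<bar> \<le> int K" using abs_mode_index_le l l' by auto
    thus "\<bar>?m - ?m'\<bar> < int Nr" using Nr by linarith
  qed (use Nr in simp)
  finally show ?thesis by (simp add: mult.commute)
qed

lemma ZY_diag_eq:
  assumes l: "l < 4*K+2"
  shows "ZY \<kappa>P \<kappa>S K R l l = (if l < 2*K+1 then par l * cnj (par l) else perp l * cnj (perp l))"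
proof -
  have vd: "vector_derivative (hankel1 (mode_index K l)) (at (\<kappa> * R)) = hankel1' (mode_index K l) (\<kappa> * R)"
    if "4 + 2 * \<bar>of_int (mode_index K l)\<bar> \<le> \<kappa> * R" for \<kappa>
    using hankel1_has_vector_derivative[of "mode_index K l" "\<kappa> * R"] that
    by (simp add: vector_derivative_at)
  hence "gP \<kappa>P R (int l - int K) = par l" if "l < 2*K+1"
    using that far_mode_index[OF l] by (simp add: gP_def par_coeff_def mode_index_def)
  moreover have "hS \<kappa>S R (int l - int (2*K+1) - int K) = perp l" if "\<not> l < 2*K+1"
    using that far_mode_index[OF l] vd
    by (simp add: hS_def perp_coeff_def mode_index_def)
  ultimately show ?thesis
    by (simp add: ZY_def complex_norm_square del: of_real_power)
qed

text \<open>On equal modes, \<open>N\<^sub>r Z\<^sub>Y\<close> removes exactly the product of the two radial coefficients.\<close>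
lemma YstarY_minus_ZY_eq:
  assumes l: "l < 4*K+2" and l': "l' < 4*K+2"
  shows "YstarY \<kappa>P \<kappa>S K Nr R l l' - of_nat Nr * ZY \<kappa>P \<kappa>S K R l l' =
    (if mode_index K l = mode_index K l' then of_nat Nr *
       ((if l < 2*K+1 \<and> l' < 2*K+1 then 0 else par l * cnj (par l'))
        + (if \<not> l < 2*K+1 \<and> \<not> l' < 2*K+1 then 0 else perp l * cnj (perp l')))
     else 0)"
proof (cases "l = l'")
  case True
  thus ?thesis using YstarY_eq[OF l l'] ZY_diag_eq[OF l] by (simp add: algebra_simps)
next
  case False
  thus ?thesis
    using YstarY_eq[OF l l'] mode_index_eq_imp_types_differ[OF l l'] by (simp add: ZY_def)
qed

end


section \<open>Bounding the remainder\<close>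

lemma norm_hankel1_hankel1'_le_uniform:
  assumes m: "\<bar>m\<bar> \<le> int K" and x: "4 + 2 * real K \<le> x"
  shows "norm (hankel1 m x) \<le> (30 + 12 * real K) / sqrt x"
    and "norm (hankel1' m x) \<le> (30 + 12 * real K) / sqrt x"
proof -
  have mK: "\<bar>real_of_int m\<bar> \<le> real K" using m by (metis of_int_abs of_int_le_iff of_int_of_nat_eq)
  hence "(30 + 12 * \<bar>of_int m\<bar>) / sqrt x \<le> (30 + 12 * real K) / sqrt x"
    using x by (intro divide_right_mono) auto
  moreover have "4 + 2 * \<bar>of_int m\<bar> \<le> x" using mK x by linarith
  ultimately show "norm (hankel1 m x) \<le> (30 + 12 * real K) / sqrt x"
    and "norm (hankel1' m x) \<le> (30 + 12 * real K) / sqrt x"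
    using norm_hankel1_le norm_hankel1'_le by (blast intro: order_trans)+
qed

lemma norm_radial_coeff_le:
  assumes \<kappa>: "\<kappa> > 0" and R: "R > 0" and m: "\<bar>m\<bar> \<le> int K" and far: "4 + 2 * real K \<le> \<kappa> * R"
  shows "norm (of_real \<kappa> * hankel1' m (\<kappa> * R)) \<le> sqrt \<kappa> * (30 + 12 * real K) / sqrt R"
proof -
  have "norm (of_real \<kappa> * hankel1' m (\<kappa> * R)) \<le> \<kappa> * ((30 + 12 * real K) / sqrt (\<kappa> * R))"
    using mult_left_mono[OF norm_hankel1_hankel1'_le_uniform(2)[OF m far], of \<kappa>] \<kappa>
    by (simp add: norm_mult)
  also have "\<dots> = \<kappa> / sqrt \<kappa> * (30 + 12 * real K) / sqrt R"
    by (simp add: real_sqrt_mult)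
  also have "\<kappa> / sqrt \<kappa> = sqrt \<kappa>" using \<kappa> by (simp add: real_div_sqrt)
  finally show ?thesis .
qed

lemma norm_angular_coeff_le:
  assumes \<kappa>: "\<kappa> > 0" and R: "R > 0" and m: "\<bar>m\<bar> \<le> int K" and far: "4 + 2 * real K \<le> \<kappa> * R"
  shows "norm (\<i> * of_int m * hankel1 m (\<kappa> * R) / of_real R) \<le> real K / sqrt \<kappa> * (30 + 12 * real K) / (R * sqrt R)"
proof -
  have mK: "\<bar>real_of_int m\<bar> \<le> real K" using m by (metis of_int_abs of_int_le_iff of_int_of_nat_eq)
  have "norm (\<i> * of_int m * hankel1 m (\<kappa> * R) / of_real R) = \<bar>real_of_int m\<bar> * norm (hankel1 m (\<kappa> * R)) / R"
    using R by (simp add: norm_mult norm_divide)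
  also have "\<dots> \<le> real K * ((30 + 12 * real K) / sqrt (\<kappa> * R)) / R"
    using mK norm_hankel1_hankel1'_le_uniform(1)[OF m far] R by (intro divide_right_mono mult_mono) auto
  also have "\<dots> = real K / sqrt \<kappa> * (30 + 12 * real K) / (R * sqrt R)"
    using \<kappa> R by (simp add: real_sqrt_mult field_simps)
  finally show ?thesis .
qed

lemma norm_mult_cnj_le:
  fixes x y :: complex and R :: real
  assumes R: "R > 0" and x: "norm x \<le> B / sqrt R" and y: "norm y \<le> B / (R * sqrt R)"
  shows "norm (x * cnj y) \<le> B\<^sup>2 / R\<^sup>2" and "norm (y * cnj x) \<le> B\<^sup>2 / R\<^sup>2"
proof -
  have "B / sqrt R \<ge> 0" using x norm_ge_zero by (rule order_trans[rotated])
  hence "norm x * norm y \<le> (B / sqrt R) * (B / (R * sqrt R))"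
    using x y by (intro mult_mono) auto
  also have "\<dots> = B\<^sup>2 / R\<^sup>2" using R by (simp add: power2_eq_square field_simps)
  finally show "norm (x * cnj y) \<le> B\<^sup>2 / R\<^sup>2" and "norm (y * cnj x) \<le> B\<^sup>2 / R\<^sup>2"
    by (simp_all add: norm_mult mult.commute)
qed

definition coeff_bound :: "real \<Rightarrow> real \<Rightarrow> nat \<Rightarrow> real" where
  "coeff_bound \<kappa>P \<kappa>S K = (sqrt \<kappa>P + sqrt \<kappa>S + real K / sqrt \<kappa>P + real K / sqrt \<kappa>S) * (30 + 12 * real K)"

lemma coeff_bound_nonneg: "0 \<le> \<kappa>P \<Longrightarrow> 0 \<le> \<kappa>S \<Longrightarrow> 0 \<le> coeff_bound \<kappa>P \<kappa>S K"
  unfolding coeff_bound_def by (intro mult_nonneg_nonneg add_nonneg_nonneg) auto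

context receiver_array
begin

abbreviation "bound \<equiv> coeff_bound \<kappa>P \<kappa>S K"

lemma norm_coeff_le:
  assumes l: "l < 4*K+2"
  shows "norm (par l) \<le> bound / sqrt R" and "norm (perp l) \<le> bound / sqrt R"
    and "\<not> l < 2*K+1 \<Longrightarrow> norm (par l) \<le> bound / (R * sqrt R)"
    and "l < 2*K+1 \<Longrightarrow> norm (perp l) \<le> bound / (R * sqrt R)"
proof -
  have R0: "R > 0" using R by simp
  note m = abs_mode_index_le[OF l]
  note radP = norm_radial_coeff_le[OF \<kappa>P R0 m far_P] and radS = norm_radial_coeff_le[OF \<kappa>S R0 m far_S]
    and angP = norm_angular_coeff_le[OF \<kappa>P R0 m far_P] and angS = norm_angular_coeff_le[OF \<kappa>S R0 m far_S]
  have parts: "sqrt \<kappa>P * (30 + 12 * real K) \<le> bound" "sqrt \<kappa>S * (30 + 12 * real K) \<le> bound"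
    "real K / sqrt \<kappa>P * (30 + 12 * real K) \<le> bound" "real K / sqrt \<kappa>S * (30 + 12 * real K) \<le> bound"
    unfolding coeff_bound_def using \<kappa>P \<kappa>S by (intro mult_right_mono; simp)+
  have "bound \<ge> 0" using \<kappa>P \<kappa>S by (simp add: coeff_bound_nonneg)
  hence sharper: "bound / (R * sqrt R) \<le> bound / sqrt R"
    using R by (intro divide_left_mono) auto
  have scale: "u \<le> bound \<Longrightarrow> u / r \<le> bound / r" if "r > 0" for u r
    using that by (simp add: divide_right_mono)
  have "sqrt R > 0" "R * sqrt R > 0" using R0 by auto
  note P = scale[OF this(1)] and S = scale[OF this(2)]
  show "norm (par l) \<le> bound / sqrt R" "norm (perp l) \<le> bound / sqrt R"
    "\<not> l < 2*K+1 \<Longrightarrow> norm (par l) \<le> bound / (R * sqrt R)"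
    "l < 2*K+1 \<Longrightarrow> norm (perp l) \<le> bound / (R * sqrt R)"
    unfolding par_coeff_def perp_coeff_def
    using radP radS angP angS P[OF parts(1)] P[OF parts(2)] S[OF parts(3)] S[OF parts(4)] sharper
    by (auto intro: order_trans)
qed

lemma norm_par_product_le:
  assumes "l < 4*K+2" "l' < 4*K+2" "\<not> (l < 2*K+1 \<and> l' < 2*K+1)"
  shows "norm (par l * cnj (par l')) \<le> bound\<^sup>2 / R\<^sup>2"
  using assms norm_coeff_le[OF assms(1)] norm_coeff_le[OF assms(2)] norm_mult_cnj_le[of R] R
  by (metis order.strict_trans2 zero_less_one)

lemma norm_perp_product_le:
  assumes "l < 4*K+2" "l' < 4*K+2" "\<not> (\<not> l < 2*K+1 \<and> \<not> l' < 2*K+1)"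
  shows "norm (perp l * cnj (perp l')) \<le> bound\<^sup>2 / R\<^sup>2"
  using assms norm_coeff_le[OF assms(1)] norm_coeff_le[OF assms(2)] norm_mult_cnj_le[of R] R
  by (metis order.strict_trans2 zero_less_one)

lemma norm_YstarY_minus_ZY_le:
  assumes l: "l < 4*K+2" and l': "l' < 4*K+2"
  shows "norm (YstarY \<kappa>P \<kappa>S K Nr R l l' - of_nat Nr * ZY \<kappa>P \<kappa>S K R l l') \<le> 2 * real Nr * bound\<^sup>2 / R\<^sup>2"
proof -
  let ?a = "if l < 2*K+1 \<and> l' < 2*K+1 then 0 else par l * cnj (par l')"
  let ?b = "if \<not> l < 2*K+1 \<and> \<not> l' < 2*K+1 then 0 else perp l * cnj (perp l')"
  have "norm ?a \<le> bound\<^sup>2 / R\<^sup>2" "norm ?b \<le> bound\<^sup>2 / R\<^sup>2"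
    using norm_par_product_le[OF l l'] norm_perp_product_le[OF l l'] by auto
  hence "norm (of_nat Nr * (?a + ?b)) \<le> real Nr * (bound\<^sup>2 / R\<^sup>2 + bound\<^sup>2 / R\<^sup>2)"
    unfolding norm_mult norm_of_nat by (intro mult_left_mono norm_triangle_le add_mono) auto
  thus ?thesis using YstarY_minus_ZY_eq[OF l l'] by (simp add: algebra_simps)
qed

end

lemma eventually_norm_YstarY_minus_ZY_le:
  fixes \<kappa>P \<kappa>S :: real and K Nr :: nat
  assumes \<kappa>P: "\<kappa>P > 0" and \<kappa>S: "\<kappa>S > 0" and Nr: "2*K+1 \<le> Nr"
  shows "\<exists>C>0. \<forall>\<^sub>F R in at_top. \<forall>l<4*K+2. \<forall>l'<4*K+2.
           cmod (YstarY \<kappa>P \<kappa>S K Nr R l l' - of_nat Nr * ZY \<kappa>P \<kappa>S K R l l') \<le> C / R\<^sup>2"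
proof -
  define C where "C = 2 * real Nr * (coeff_bound \<kappa>P \<kappa>S K)\<^sup>2 + 1"
  have "\<forall>\<^sub>F R in at_top. receiver_array \<kappa>P \<kappa>S K Nr R"
  proof -
    have "\<forall>\<^sub>F R in at_top. max 1 (max ((4 + 2 * real K) / \<kappa>P) ((4 + 2 * real K) / \<kappa>S)) \<le> R"
      by (rule eventually_ge_at_top)
    thus ?thesis
      by eventually_elim (use \<kappa>P \<kappa>S Nr in \<open>auto simp: receiver_array_def field_simps\<close>)
  qed
  hence "\<forall>\<^sub>F R in at_top. \<forall>l<4*K+2. \<forall>l'<4*K+2.
           cmod (YstarY \<kappa>P \<kappa>S K Nr R l l' - of_nat Nr * ZY \<kappa>P \<kappa>S K R l l') \<le> C / R\<^sup>2"
  proof eventually_elim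
    case (elim R)
    then interpret receiver_array \<kappa>P \<kappa>S K Nr R .
    have "2 * real Nr * (coeff_bound \<kappa>P \<kappa>S K)\<^sup>2 / R\<^sup>2 \<le> C / R\<^sup>2"
      unfolding C_def by (intro divide_right_mono) auto
    thus ?case using norm_YstarY_minus_ZY_le by (blast intro: order_trans)
  qed
  moreover have "C > 0" unfolding C_def by (simp add: add_nonneg_pos)
  ultimately show ?thesis by blast
qed

theorem lemma4p2:
  fixes lam0 mu0 rho0 \<omega> :: real and K Nr :: nat
  assumes "lam0 > 0" and "mu0 > 0" and "rho0 > 0" and "\<omega> > 0"
    and "Nr \<ge> 2*K+1"
  shows "\<exists>C>0. \<forall>\<^sub>F R in at_top. \<forall>l<4*K+2. \<forall>l'<4*K+2.
           cmod (YstarY (\<omega> / sqrt ((lam0 + 2*mu0) / rho0)) (\<omega> / sqrt (mu0 / rho0)) K Nr R l l'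
                 - of_nat Nr * ZY (\<omega> / sqrt ((lam0 + 2*mu0) / rho0)) (\<omega> / sqrt (mu0 / rho0)) K R l l')
           \<le> C / R\<^sup>2"
  by (rule eventually_norm_YstarY_minus_ZY_le) (use assms in auto)

end
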